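(* Let ${\cal D}\subset\mathbb{R}^2$ be a quadriculated disk and ${\cal R}={\cal D}\times[0,2]$. The set of slab tilings of ${\cal R}$ is either empty or connected under flips.
   Context: A quadriculated disk is a connected, simply connected finite union of unit squares $[x,x+1]\times[y,y+1]$, $(x,y)\in\mathbb{Z}^2$. A slab is a $2\times2\times1$ box (any orientation) which is a union of four unit cubes $[x,x+1]\times[y,y+1]\times[z,z+1]$. A slab tiling of ${\cal R}$ is a decomposition of ${\cal R}$ into slabs with disjoint interiors. A flip takes two slabs of the tiling whose union is a $2\times2\times2$ cube and replaces them by one of the two other pairs of slabs tiling that cube. "Connected under flips" means that any two tilings are joined by a finite sequence of flips. *)

theory Defs
  imports "HOL-Analysis.Analysis"
begin

text \<open>Unit squares of the plane are indexed by their lower-left corner (x,y) in Z^2;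
  unit cubes of space by their lower corner (x,y,z) in Z^3.\<close>

definition unit_square :: "int \<times> int \<Rightarrow> (real \<times> real) set" where
  "unit_square p = {(a, b). real_of_int (fst p) \<le> a \<and> a \<le> real_of_int (fst p) + 1 \<and>
                            real_of_int (snd p) \<le> b \<and> b \<le> real_of_int (snd p) + 1}"

definition squares_union :: "(int \<times> int) set \<Rightarrow> (real \<times> real) set" where
  "squares_union D = (\<Union>p\<in>D. unit_square p)"

definition quadriculated_disk :: "(int \<times> int) set \<Rightarrow> bool" where
  "quadriculated_disk D \<longleftrightarrow> finite D \<and> D \<noteq> {} \<and>
     connected (squares_union D) \<and> simply_connected (squares_union D)"

definition cylinder2 :: "(int \<times> int) set \<Rightarrow> (int \<times> int \<times> int) set" where
  "cylinder2 D = {(x, y, z). (x, y) \<in> D \<and> (z = 0 \<or> z = 1)}"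

definition slab :: "(int \<times> int \<times> int) set \<Rightarrow> bool" where
  "slab S \<longleftrightarrow> (\<exists>x y z.
      S = {(x + i, y + j, z) | i j. i \<in> {0, 1} \<and> j \<in> {0, 1}} \<or>
      S = {(x + i, y, z + k) | i k. i \<in> {0, 1} \<and> k \<in> {0, 1}} \<or>
      S = {(x, y + j, z + k) | j k. j \<in> {0, 1} \<and> k \<in> {0, 1}})"

definition cube2 :: "(int \<times> int \<times> int) set \<Rightarrow> bool" where
  "cube2 C \<longleftrightarrow> (\<exists>x y z. C = {(x + i, y + j, z + k) | i j k.
      i \<in> {0, 1} \<and> j \<in> {0, 1} \<and> k \<in> {0, 1}})"

text \<open>A slab tiling of a region R: a set of slabs with disjoint interiors
  (equivalently, pairwise disjoint sets of unit cubes) whose union is R.\<close>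
definition slab_tiling :: "(int \<times> int \<times> int) set \<Rightarrow> (int \<times> int \<times> int) set set \<Rightarrow> bool" where
  "slab_tiling R T \<longleftrightarrow> (\<forall>S\<in>T. slab S) \<and>
     (\<forall>S1\<in>T. \<forall>S2\<in>T. S1 \<noteq> S2 \<longrightarrow> S1 \<inter> S2 = {}) \<and> \<Union>T = R"

definition flip :: "(int \<times> int \<times> int) set set \<Rightarrow> (int \<times> int \<times> int) set set \<Rightarrow> bool" where
  "flip T T' \<longleftrightarrow> (\<exists>S1 S2 S1' S2'.
      S1 \<in> T \<and> S2 \<in> T \<and> S1 \<noteq> S2 \<and> cube2 (S1 \<union> S2) \<and>
      slab S1' \<and> slab S2' \<and> S1' \<inter> S2' = {} \<and> S1' \<union> S2' = S1 \<union> S2 \<and>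
      {S1', S2'} \<noteq> {S1, S2} \<and>
      T' = (T - {S1, S2}) \<union> {S1', S2'})"

end

theory Submission
  imports Defs
begin

text \<open>Every slab of a tiling of D x [0,2] is flat (a 2x2 square in one layer) or upright
  (a domino times [0,2]). Take a flat slab whose base square is lexicographically least: the other
  layer of its column is covered by a flat slab with the same base, and flipping this stack into
  two upright slabs lowers the number of flat slabs. Hence every tiling is connected by flips to
  the lift of a domino tiling of D, and domino flips lift to slab flips.

  It remains to show Thurston's theorem that the domino tilings of a simply connected region are
  connected by flips. The difference g of the height functions of two tilings T1, T2 is a
  function on lattice points which vanishes outside the interior of D, because the complement of
  D is connected. If g is positive somewhere, then among the points where g is maximal there is
  one from which the height of T1 decreases in all four directions: otherwise the steps of
  increasing height would contain a closed walk of positive circulation, which is impossible by a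
  discrete Green formula, since the winding number around any cell outside D is zero. At such a
  local maximum T1 contains two parallel dominoes forming a 2x2 square, and flipping them lowers
  g there by 4. So the sum of |g| over the interior vertices decreases until T1 = T2.\<close>

section \<open>Tilings and dominoes\<close>

definition tiling :: "('a set \<Rightarrow> bool) \<Rightarrow> 'a set \<Rightarrow> 'a set set \<Rightarrow> bool" where
  "tiling P R T \<longleftrightarrow> (\<forall>S\<in>T. P S) \<and> (\<forall>S1\<in>T. \<forall>S2\<in>T. S1 \<noteq> S2 \<longrightarrow> S1 \<inter> S2 = {}) \<and> \<Union>T = R"

lemma tiling_tile_subset: "tiling P R T \<Longrightarrow> S \<in> T \<Longrightarrow> S \<subseteq> R"
  unfolding tiling_def by blast

lemma tiling_tile_property: "tiling P R T \<Longrightarrow> S \<in> T \<Longrightarrow> P S"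
  unfolding tiling_def by blast

lemma tiling_tiles_disjoint: "tiling P R T \<Longrightarrow> S1 \<in> T \<Longrightarrow> S2 \<in> T \<Longrightarrow> S1 \<noteq> S2 \<Longrightarrow> S1 \<inter> S2 = {}"
  unfolding tiling_def by blast

lemma tiling_replace_pair:
  assumes "tiling P R T" "A1 \<in> T" "A2 \<in> T" "P B1" "P B2" "B1 \<inter> B2 = {}" "B1 \<union> B2 = A1 \<union> A2"
  shows "tiling P R (T - {A1, A2} \<union> {B1, B2})"
proof -
  have T: "\<forall>S\<in>T. P S" "\<And>S1 S2. S1 \<in> T \<Longrightarrow> S2 \<in> T \<Longrightarrow> S1 \<noteq> S2 \<Longrightarrow> S1 \<inter> S2 = {}" "\<Union>T = R"
    using assms(1) unfolding tiling_def by blast+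
  have old: "S \<inter> (A1 \<union> A2) = {}" if "S \<in> T - {A1, A2}" for S
    using T(2) assms(2,3) that by blast
  have new: "S \<subseteq> A1 \<union> A2" if "S \<in> {B1, B2}" for S
    using assms(7) that by blast
  have "\<forall>S1\<in>T - {A1, A2} \<union> {B1, B2}. \<forall>S2\<in>T - {A1, A2} \<union> {B1, B2}. S1 \<noteq> S2 \<longrightarrow> S1 \<inter> S2 = {}"
  proof (intro ballI impI)
    fix S1 S2
    assume S: "S1 \<in> T - {A1, A2} \<union> {B1, B2}" "S2 \<in> T - {A1, A2} \<union> {B1, B2}" "S1 \<noteq> S2"
    show "S1 \<inter> S2 = {}"
  proof (cases "S1 \<in> {B1, B2}"; cases "S2 \<in> {B1, B2}")
    assume "S1 \<in> {B1, B2}" "S2 \<in> {B1, B2}"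
    then show ?thesis using S(3) assms(6) by auto
  next
    assume "S1 \<in> {B1, B2}" "S2 \<notin> {B1, B2}"
    then show ?thesis using S(2) old[of S2] new[of S1] by blast
  next
    assume "S1 \<notin> {B1, B2}" "S2 \<in> {B1, B2}"
    then show ?thesis using S(1) old[of S1] new[of S2] by blast
  next
    assume "S1 \<notin> {B1, B2}" "S2 \<notin> {B1, B2}"
    then show ?thesis using S T(2) by blast
  qed
  qed
  moreover have "\<forall>S\<in>T - {A1, A2} \<union> {B1, B2}. P S"
    using T(1) assms(4,5) by blast
  moreover have "\<Union>(T - {A1, A2} \<union> {B1, B2}) = \<Union>(T - {A1, A2}) \<union> (A1 \<union> A2)"
    using assms(7) by auto
  moreover have "\<dots> = R"
    using T(3) assms(2,3) by auto
  ultimately show ?thesis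
    unfolding tiling_def by (intro conjI) simp_all
qed

lemma tiling_replace_pair_inverse:
  assumes T: "tiling P R T" and A: "A1 \<in> T" "A2 \<in> T"
    and B: "B1 \<noteq> {}" "B2 \<noteq> {}" "B1 \<union> B2 = A1 \<union> A2"
  shows "T = (T - {A1, A2} \<union> {B1, B2}) - {B1, B2} \<union> {A1, A2}"
proof -
  have "B \<notin> T - {A1, A2}" if "B \<noteq> {}" "B \<subseteq> A1 \<union> A2" for B
  proof
    assume "B \<in> T - {A1, A2}"
    then have "B \<inter> A1 = {}" "B \<inter> A2 = {}"
      using tiling_tiles_disjoint[OF T] A by blast+
    then show False using that by blast
  qed
  then have "B1 \<notin> T - {A1, A2}" "B2 \<notin> T - {A1, A2}"
    using B by auto
  then show ?thesis using A by blast
qed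

type_synonym cell = "int \<times> int"

definition adjacent :: "cell \<Rightarrow> cell \<Rightarrow> bool" where
  "adjacent p q \<longleftrightarrow>
     (fst p = fst q \<and> \<bar>snd p - snd q\<bar> = 1) \<or> (snd p = snd q \<and> \<bar>fst p - fst q\<bar> = 1)"

lemma adjacent_iff:
  "adjacent p q \<longleftrightarrow>
     q = (fst p + 1, snd p) \<or> q = (fst p - 1, snd p) \<or> q = (fst p, snd p + 1) \<or> q = (fst p, snd p - 1)"
proof
  assume "adjacent p q"
  then have "(fst q = fst p \<and> (snd q = snd p + 1 \<or> snd q = snd p - 1)) \<or>
             (snd q = snd p \<and> (fst q = fst p + 1 \<or> fst q = fst p - 1))"
    unfolding adjacent_def by arith
  then show "q = (fst p + 1, snd p) \<or> q = (fst p - 1, snd p) \<or> q = (fst p, snd p + 1) \<or> q = (fst p, snd p - 1)"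
    by (cases p; cases q) auto
qed (auto simp: adjacent_def)

lemma adjacent_sym: "adjacent p q \<Longrightarrow> adjacent q p"
  by (auto simp: adjacent_def abs_minus_commute)

definition domino :: "cell set \<Rightarrow> bool" where
  "domino d \<longleftrightarrow> (\<exists>p q. adjacent p q \<and> d = {p, q})"

lemma domino_horizontal: "domino {(x, y), (x + 1, y)}"
  unfolding domino_def adjacent_def by (rule exI[of _ "(x, y)"], rule exI[of _ "(x + 1, y)"]) simp

lemma domino_vertical: "domino {(x, y), (x, y + 1)}"
  unfolding domino_def adjacent_def by (rule exI[of _ "(x, y)"], rule exI[of _ "(x, y + 1)"]) simp

definition horizontal_pair :: "int \<Rightarrow> int \<Rightarrow> cell set set" where
  "horizontal_pair x y = {{(x, y), (x + 1, y)}, {(x, y + 1), (x + 1, y + 1)}}"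

definition vertical_pair :: "int \<Rightarrow> int \<Rightarrow> cell set set" where
  "vertical_pair x y = {{(x, y), (x, y + 1)}, {(x + 1, y), (x + 1, y + 1)}}"

definition domino_flip :: "cell set set \<Rightarrow> cell set set \<Rightarrow> bool" where
  "domino_flip T T' \<longleftrightarrow> (\<exists>x y.
     horizontal_pair x y \<subseteq> T \<and> T' = T - horizontal_pair x y \<union> vertical_pair x y \<or>
     vertical_pair x y \<subseteq> T \<and> T' = T - vertical_pair x y \<union> horizontal_pair x y)"

lemma tiling_domino_flip:
  assumes T: "tiling domino D T" and "domino_flip T T'"
  shows "tiling domino D T'"
proof -
  obtain x y where
    "horizontal_pair x y \<subseteq> T \<and> T' = T - horizontal_pair x y \<union> vertical_pair x y \<or>
     vertical_pair x y \<subseteq> T \<and> T' = T - vertical_pair x y \<union> horizontal_pair x y"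
    using assms(2) unfolding domino_flip_def by blast
  then show ?thesis
  proof (elim disjE conjE)
    assume "horizontal_pair x y \<subseteq> T" and T': "T' = T - horizontal_pair x y \<union> vertical_pair x y"
    then show ?thesis
      unfolding T' horizontal_pair_def vertical_pair_def
      by (intro tiling_replace_pair[OF T]) (auto simp: domino_horizontal domino_vertical)
  next
    assume "vertical_pair x y \<subseteq> T" and T': "T' = T - vertical_pair x y \<union> horizontal_pair x y"
    then show ?thesis
      unfolding T' horizontal_pair_def vertical_pair_def
      by (intro tiling_replace_pair[OF T]) (auto simp: domino_horizontal domino_vertical)
  qed
qed

lemma domino_flip_sym:
  assumes T: "tiling domino D T" and "domino_flip T T'"
  shows "domino_flip T' T"
proof -
  obtain x y where
    "horizontal_pair x y \<subseteq> T \<and> T' = T - horizontal_pair x y \<union> vertical_pair x y \<or>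
     vertical_pair x y \<subseteq> T \<and> T' = T - vertical_pair x y \<union> horizontal_pair x y"
    using assms(2) unfolding domino_flip_def by blast
  then have "vertical_pair x y \<subseteq> T' \<and> T = T' - vertical_pair x y \<union> horizontal_pair x y \<or>
             horizontal_pair x y \<subseteq> T' \<and> T = T' - horizontal_pair x y \<union> vertical_pair x y"
  proof (elim disjE conjE)
    assume "horizontal_pair x y \<subseteq> T" and T': "T' = T - horizontal_pair x y \<union> vertical_pair x y"
    then show ?thesis
      unfolding T' horizontal_pair_def vertical_pair_def
      by (intro disjI1 conjI tiling_replace_pair_inverse[OF T]) auto
  next
    assume "vertical_pair x y \<subseteq> T" and T': "T' = T - vertical_pair x y \<union> horizontal_pair x y"
    then show ?thesis
      unfolding T' horizontal_pair_def vertical_pair_def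
      by (intro disjI2 conjI tiling_replace_pair_inverse[OF T]) auto
  qed
  then show ?thesis unfolding domino_flip_def by blast
qed

section \<open>Height functions of domino tilings\<close>

definition checker :: "int \<Rightarrow> int \<Rightarrow> int" where
  "checker x y = (if even (x + y) then 1 else -1)"

lemma checker_shift [simp]:
  "checker x (y + 1) = - checker x y" "checker x (1 + y) = - checker x y"
  "checker x (y - 1) = - checker x y"
  "checker (x + 1) y = - checker x y" "checker (1 + x) y = - checker x y"
  "checker (x - 1) y = - checker x y"
  by (auto simp: checker_def even_add)

lemma checker_cases: "checker x y = 1 \<or> checker x y = -1"
  by (simp add: checker_def)

text \<open>Thurston's height function: along an edge of the grid with a cell of checker colour 1
  on its left the height rises by 1, unless a domino crosses the edge, in which case it drops
  by 3. Vertex (x,y) is the lower left corner of cell (x,y); hflux is the increment from (x,y)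
  to (x+1,y), vflux the one from (x,y) to (x,y+1).\<close>

definition hflux :: "cell set set \<Rightarrow> int \<Rightarrow> int \<Rightarrow> int" where
  "hflux T x y = (if {(x, y), (x, y - 1)} \<in> T then -3 else 1) * checker x y"

definition vflux :: "cell set set \<Rightarrow> int \<Rightarrow> int \<Rightarrow> int" where
  "vflux T x y = (if {(x - 1, y), (x, y)} \<in> T then -3 else 1) * checker (x - 1) y"

definition step_flux :: "cell set set \<Rightarrow> cell \<Rightarrow> cell \<Rightarrow> int" where
  "step_flux T v w =
     (if w = (fst v + 1, snd v) then hflux T (fst v) (snd v)
      else if w = (fst v - 1, snd v) then - hflux T (fst w) (snd w)
      else if w = (fst v, snd v + 1) then vflux T (fst v) (snd v)
      else if w = (fst v, snd v - 1) then - vflux T (fst w) (snd w) else 0)"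

definition cover_count :: "cell set set \<Rightarrow> int \<Rightarrow> int \<Rightarrow> int" where
  "cover_count T x y =
     (if {(x, y), (x, y - 1)} \<in> T then 1 else 0) + (if {(x, y), (x + 1, y)} \<in> T then 1 else 0) +
     (if {(x, y + 1), (x, y)} \<in> T then 1 else 0) + (if {(x - 1, y), (x, y)} \<in> T then 1 else 0)"

definition curl :: "cell set set \<Rightarrow> int \<Rightarrow> int \<Rightarrow> int" where
  "curl T x y = 4 * checker x y * (1 - cover_count T x y)"

lemma circulation_around_cell:
  "hflux T x y + vflux T (x + 1) y - hflux T x (y + 1) - vflux T x y = curl T x y"
  by (simp add: hflux_def vflux_def curl_def cover_count_def algebra_simps)

lemma cover_count_tiling:
  assumes T: "tiling domino D T"
  shows "cover_count T x y = (if (x, y) \<in> D then 1 else 0)"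
proof (cases "(x, y) \<in> D")
  case False
  then have "\<And>q. {(x, y), q} \<notin> T" "\<And>q. {q, (x, y)} \<notin> T"
    using tiling_tile_subset[OF T] by blast+
  then show ?thesis using False unfolding cover_count_def by simp
next
  case True
  then obtain d where d: "d \<in> T" "(x, y) \<in> d"
    using T unfolding tiling_def by blast
  obtain p q where pq: "adjacent p q" "d = {p, q}"
    using tiling_tile_property[OF T d(1)] unfolding domino_def by blast
  define q' where "q' = (if p = (x, y) then q else p)"
  have q': "adjacent (x, y) q'" "d = {(x, y), q'}"
    using pq d(2) by (auto simp: q'_def adjacent_def abs_minus_commute)
  have unique: "e \<in> T \<longleftrightarrow> e = d" if "(x, y) \<in> e" for e
    using tiling_tiles_disjoint[OF T] d that by blast
  have members: "{(x, y), (x, y - 1)} \<in> T \<longleftrightarrow> {(x, y), (x, y - 1)} = d"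
    "{(x, y), (x + 1, y)} \<in> T \<longleftrightarrow> {(x, y), (x + 1, y)} = d"
    "{(x, y + 1), (x, y)} \<in> T \<longleftrightarrow> {(x, y + 1), (x, y)} = d"
    "{(x - 1, y), (x, y)} \<in> T \<longleftrightarrow> {(x - 1, y), (x, y)} = d"
    by (simp_all add: unique)
  show ?thesis
    unfolding cover_count_def members q'(2) using True q'(1)[unfolded adjacent_iff]
    by (elim disjE) (simp_all add: doubleton_eq_iff)
qed

lemma curl_tiling: "tiling domino D T \<Longrightarrow> curl T x y = (if (x, y) \<in> D then 0 else 4 * checker x y)"
  by (simp add: curl_def cover_count_tiling)

lemma hflux_outside:
  "tiling domino D T \<Longrightarrow> (x, y) \<notin> D \<or> (x, y - 1) \<notin> D \<Longrightarrow> hflux T x y = checker x y"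
  unfolding hflux_def using tiling_tile_subset[of domino D T "{(x, y), (x, y - 1)}"] by auto

lemma vflux_outside:
  "tiling domino D T \<Longrightarrow> (x - 1, y) \<notin> D \<or> (x, y) \<notin> D \<Longrightarrow> vflux T x y = checker (x - 1) y"
  unfolding vflux_def using tiling_tile_subset[of domino D T "{(x - 1, y), (x, y)}"] by auto

lemma local_max_square:
  assumes down: "\<And>w. adjacent (x, y) w \<Longrightarrow> step_flux T (x, y) w < 0"
  shows "checker x y = 1 \<and> vertical_pair (x - 1) (y - 1) \<subseteq> T \<or>
    checker x y = -1 \<and> horizontal_pair (x - 1) (y - 1) \<subseteq> T"
proof -
  have right: "hflux T x y < 0" and left: "0 < hflux T (x - 1) y"
    and up: "vflux T x y < 0" and below: "0 < vflux T x (y - 1)"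
    using down[of "(x + 1, y)"] down[of "(x - 1, y)"] down[of "(x, y + 1)"] down[of "(x, y - 1)"]
    by (simp_all add: adjacent_iff step_flux_def)
  consider "checker x y = 1" | "checker x y = -1" using checker_cases by blast
  then show ?thesis
  proof cases
    case 1
    then have "{(x, y - 1), (x, y)} \<in> T" "{(x - 1, y - 1), (x - 1, y)} \<in> T"
      using right left unfolding hflux_def by (auto split: if_splits simp: insert_commute)
    then show ?thesis using 1 by (simp add: vertical_pair_def)
  next
    case 2
    then have "{(x - 1, y), (x, y)} \<in> T" "{(x - 1, y - 1), (x, y - 1)} \<in> T"
      using up below unfolding vflux_def by (auto split: if_splits)
    then show ?thesis using 2 by (simp add: horizontal_pair_def)
  qed
qed

lemma flip_at_local_max:
  assumes T: "tiling domino D T" and down: "\<And>w. adjacent (x, y) w \<Longrightarrow> step_flux T (x, y) w < 0"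
  shows "\<exists>T'. domino_flip T T' \<and> (\<forall>i j. hflux T' i j - hflux T i j =
    (if j = y \<and> i = x - 1 then -4 else 0) + (if j = y \<and> i = x then 4 else 0))"
proof -
  have "checker x y = 1 \<and> vertical_pair (x - 1) (y - 1) \<subseteq> T \<or>
      checker x y = -1 \<and> horizontal_pair (x - 1) (y - 1) \<subseteq> T"
    using down by (rule local_max_square)
  then show ?thesis
  proof (elim disjE conjE)
    assume checker: "checker x y = 1" and pair: "vertical_pair (x - 1) (y - 1) \<subseteq> T"
    define T' where "T' = T - vertical_pair (x - 1) (y - 1) \<union> horizontal_pair (x - 1) (y - 1)"
    have "{(i, j), (i, j - 1)} \<in> T' \<longleftrightarrow>
        {(i, j), (i, j - 1)} \<in> T \<and> \<not> (j = y \<and> (i = x - 1 \<or> i = x))" for i j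
      unfolding T'_def vertical_pair_def horizontal_pair_def by (auto simp: doubleton_eq_iff)
    then have "hflux T' i j - hflux T i j =
        (if j = y \<and> i = x - 1 then -4 else 0) + (if j = y \<and> i = x then 4 else 0)" for i j
      using pair checker unfolding hflux_def by (auto simp: insert_commute vertical_pair_def)
    moreover have "domino_flip T T'" unfolding domino_flip_def T'_def using pair by blast
    ultimately show ?thesis by blast
  next
    assume checker: "checker x y = -1" and pair: "horizontal_pair (x - 1) (y - 1) \<subseteq> T"
    then have h: "{(x - 1, y), (x, y)} \<in> T" by (simp add: horizontal_pair_def)
    have absent: "{(x - 1, y - 1), (x - 1, y)} \<notin> T" "{(x, y - 1), (x, y)} \<notin> T"
      using tiling_tiles_disjoint[OF T h, of "{(x - 1, y - 1), (x - 1, y)}"]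
        tiling_tiles_disjoint[OF T h, of "{(x, y - 1), (x, y)}"]
      by (auto simp: doubleton_eq_iff)
    define T' where "T' = T - horizontal_pair (x - 1) (y - 1) \<union> vertical_pair (x - 1) (y - 1)"
    have "{(i, j), (i, j - 1)} \<in> T' \<longleftrightarrow>
        {(i, j), (i, j - 1)} \<in> T \<or> (j = y \<and> (i = x - 1 \<or> i = x))" for i j
      unfolding T'_def vertical_pair_def horizontal_pair_def by (auto simp: doubleton_eq_iff)
    then have "hflux T' i j - hflux T i j =
        (if j = y \<and> i = x - 1 then -4 else 0) + (if j = y \<and> i = x then 4 else 0)" for i j
      using absent checker unfolding hflux_def by (auto simp: insert_commute)
    moreover have "domino_flip T T'" unfolding domino_flip_def T'_def using pair by blast
    ultimately show ?thesis by blast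
  qed
qed

definition inner_vertex :: "cell set \<Rightarrow> cell \<Rightarrow> bool" where
  "inner_vertex D v \<longleftrightarrow>
     v \<in> D \<and> (fst v - 1, snd v) \<in> D \<and> (fst v, snd v - 1) \<in> D \<and> (fst v - 1, snd v - 1) \<in> D"

definition complement_step :: "cell set \<Rightarrow> (cell \<times> cell) set" where
  "complement_step D = {(c, c'). c \<notin> D \<and> c' \<notin> D \<and> adjacent c c'}"

definition complement_connected :: "cell set \<Rightarrow> bool" where
  "complement_connected D \<longleftrightarrow> (\<forall>q r. q \<notin> D \<longrightarrow> r \<notin> D \<longrightarrow> (q, r) \<in> (complement_step D)\<^sup>*)"

lemma complement_connected_constant:
  assumes "complement_connected D" "q \<notin> D" "r \<notin> D"
    and "\<And>c c'. c \<notin> D \<Longrightarrow> c' \<notin> D \<Longrightarrow> adjacent c c' \<Longrightarrow> f c = f c'"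
  shows "f q = f r"
proof -
  have "(q, r) \<in> (complement_step D)\<^sup>*"
    using assms(1-3) unfolding complement_connected_def by blast
  then show ?thesis
    by (induction rule: rtrancl_induct) (auto simp: complement_step_def assms(4))
qed

definition row_flux :: "int \<Rightarrow> cell set set \<Rightarrow> int \<Rightarrow> int \<Rightarrow> int" where
  "row_flux a T x y = (\<Sum>i\<in>{a..<x}. hflux T i y)"

lemma row_flux_step_right: "a \<le> x \<Longrightarrow> row_flux a T (x + 1) y = row_flux a T x y + hflux T x y"
proof -
  assume "a \<le> x"
  then have "{a..<x + 1} = insert x {a..<x}" by auto
  then show ?thesis by (simp add: row_flux_def add.commute)
qed

lemma row_flux_step_up:
  assumes "a \<le> x"
  shows "row_flux a T x (y + 1) =
    row_flux a T x y + vflux T x y - vflux T a y - (\<Sum>i\<in>{a..<x}. curl T i y)"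
  using assms
proof (induction x rule: int_ge_induct)
  case base
  then show ?case by (simp add: row_flux_def)
next
  case (step x)
  have "{a..<x + 1} = insert x {a..<x}" using step.hyps by auto
  then show ?case
    using step.IH row_flux_step_right[OF step.hyps, of T y] row_flux_step_right[OF step.hyps, of T "y + 1"]
      circulation_around_cell[of T x y]
    by simp
qed

text \<open>crossing c v w is the signed crossing of the step from v to w with the horizontal
  ray going right from the centre of cell c, so that winding p n c is the winding number of
  the closed walk p around that centre.\<close>

definition crossing :: "cell \<Rightarrow> cell \<Rightarrow> cell \<Rightarrow> int" where
  "crossing c v w =
     (if w = (fst v, snd v + 1) \<and> snd v = snd c \<and> fst c < fst v then 1
      else if w = (fst v, snd v - 1) \<and> snd w = snd c \<and> fst c < fst v then -1 else 0)"

definition winding :: "(nat \<Rightarrow> cell) \<Rightarrow> nat \<Rightarrow> cell \<Rightarrow> int" where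
  "winding p n c = (\<Sum>k<n. crossing c (p k) (p (Suc k)))"

definition closed_walk :: "cell set \<Rightarrow> (nat \<Rightarrow> cell) \<Rightarrow> nat \<Rightarrow> bool" where
  "closed_walk D p n \<longleftrightarrow>
     p n = p 0 \<and> (\<forall>k<n. adjacent (p k) (p (Suc k))) \<and> (\<forall>k\<le>n. inner_vertex D (p k))"

definition on_top_ray :: "cell \<Rightarrow> cell \<Rightarrow> int" where
  "on_top_ray c v = (if snd v = snd c + 1 \<and> fst c < fst v then 1 else 0)"

text \<open>Moving c to a neighbouring cell changes the crossings only on the common edge of the two
  cells (and, for vertical moves, by the telescoping term on_top_ray); a walk of inner vertices
  runs along that edge only if both cells lie in D.\<close>

lemma crossing_shift_right:
  assumes v: "inner_vertex D v" and c: "c \<notin> D \<or> (fst c + 1, snd c) \<notin> D"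
  shows "crossing c v w = crossing (fst c + 1, snd c) v w"
proof -
  obtain i j where cc: "c = (i, j)" by (cases c)
  obtain x y where vv: "v = (x, y)" by (cases v)
  have "\<not> (x = i + 1 \<and> (y = j \<or> y = j + 1))"
    using v c unfolding vv cc inner_vertex_def by auto
  moreover obtain x' y' where ww: "w = (x', y')" by (cases w)
  ultimately show ?thesis by (auto simp: crossing_def cc vv)
qed

lemma crossing_shift_up:
  assumes v: "inner_vertex D v" and w: "inner_vertex D w" and "adjacent v w"
    and c: "c \<notin> D \<or> (fst c, snd c + 1) \<notin> D"
  shows "crossing c v w - crossing (fst c, snd c + 1) v w = on_top_ray c w - on_top_ray c v"
proof -
  obtain i j where cc: "c = (i, j)" by (cases c)
  obtain x y where vv: "v = (x, y)" by (cases v)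
  from assms(3) show ?thesis unfolding adjacent_iff
  proof (elim disjE)
    assume "w = (fst v + 1, snd v)"
    then have ww: "w = (x + 1, y)" by (simp add: vv)
    have "\<not> (y = j + 1 \<and> x = i)" using w c unfolding ww cc inner_vertex_def by auto
    then have "on_top_ray c w = on_top_ray c v" by (auto simp: on_top_ray_def cc ww vv)
    moreover have "crossing c' v w = 0" for c' by (simp add: crossing_def ww vv)
    ultimately show ?thesis by simp
  next
    assume "w = (fst v - 1, snd v)"
    then have ww: "w = (x - 1, y)" by (simp add: vv)
    have "\<not> (y = j + 1 \<and> x = i + 1)" using v c unfolding vv cc inner_vertex_def by auto
    then have "on_top_ray c w = on_top_ray c v" by (auto simp: on_top_ray_def cc ww vv)
    moreover have "crossing c' v w = 0" for c' by (simp add: crossing_def ww vv)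
    ultimately show ?thesis by simp
  qed (auto simp: crossing_def on_top_ray_def cc)
qed

lemma closed_walk_telescope:
  assumes "closed_walk D p n"
  shows "(\<Sum>k<n. f (p (Suc k)) - f (p k)) = (0::int)"
  using sum_lessThan_telescope[of "\<lambda>k. f (p k)" n] assms by (simp add: closed_walk_def)

lemma winding_shift_right:
  assumes "closed_walk D p n" "c \<notin> D \<or> (fst c + 1, snd c) \<notin> D"
  shows "winding p n c = winding p n (fst c + 1, snd c)"
  unfolding winding_def
  by (rule sum.cong) (use assms in \<open>auto intro!: crossing_shift_right[of D] simp: closed_walk_def\<close>)

lemma winding_shift_up:
  assumes W: "closed_walk D p n" and c: "c \<notin> D \<or> (fst c, snd c + 1) \<notin> D"
  shows "winding p n c = winding p n (fst c, snd c + 1)"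
proof -
  have "(\<Sum>k<n. crossing c (p k) (p (Suc k)) - crossing (fst c, snd c + 1) (p k) (p (Suc k))) =
        (\<Sum>k<n. on_top_ray c (p (Suc k)) - on_top_ray c (p k))"
    by (rule sum.cong) (use W c in \<open>auto intro!: crossing_shift_up[of D] simp: closed_walk_def\<close>)
  then show ?thesis
    using closed_walk_telescope[OF W, of "on_top_ray c"] unfolding winding_def by (simp add: sum_subtractf)
qed

lemma winding_adjacent_outside:
  assumes W: "closed_walk D p n" and "c \<notin> D" "c' \<notin> D" "adjacent c c'"
  shows "winding p n c = winding p n c'"
proof -
  obtain x y where c: "c = (x, y)" by (cases c)
  from assms(4) show ?thesis unfolding adjacent_iff
  proof (elim disjE)
    assume "c' = (fst c + 1, snd c)" then show ?thesis using winding_shift_right[OF W] assms(2) c by simp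
  next
    assume "c' = (fst c - 1, snd c)" then show ?thesis using winding_shift_right[OF W, of c'] assms(3) c by simp
  next
    assume "c' = (fst c, snd c + 1)" then show ?thesis using winding_shift_up[OF W] assms(2) c by simp
  next
    assume "c' = (fst c, snd c - 1)" then show ?thesis using winding_shift_up[OF W, of c'] assms(3) c by simp
  qed
qed

lemma step_flux_sign:
  assumes "adjacent v w"
  shows "\<exists>s. (s = 1 \<or> s = -1) \<and> (\<forall>T. step_flux T v w = s \<or> step_flux T v w = -3 * s)"
proof -
  obtain x y where v: "v = (x, y)" by (cases v)
  have checkers: "checker x y = 1 \<or> checker x y = -1" "checker (x - 1) y = 1 \<or> checker (x - 1) y = -1"
    "checker (x - 1) (y - 1) = 1 \<or> checker (x - 1) (y - 1) = -1"
    by (rule checker_cases)+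
  from assms show ?thesis unfolding adjacent_iff
  proof (elim disjE)
    assume w: "w = (fst v + 1, snd v)"
    show ?thesis
      by (rule exI[of _ "checker x y"]) (use checkers in \<open>auto simp: step_flux_def hflux_def v w\<close>)
  next
    assume w: "w = (fst v - 1, snd v)"
    show ?thesis
      by (rule exI[of _ "- checker (x - 1) y"]) (use checkers in \<open>auto simp: step_flux_def hflux_def v w\<close>)
  next
    assume w: "w = (fst v, snd v + 1)"
    show ?thesis
      by (rule exI[of _ "checker (x - 1) y"]) (use checkers in \<open>auto simp: step_flux_def vflux_def v w\<close>)
  next
    assume w: "w = (fst v, snd v - 1)"
    show ?thesis
      by (rule exI[of _ "- checker (x - 1) (y - 1)"]) (use checkers in \<open>auto simp: step_flux_def vflux_def v w\<close>)
  qed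
qed

locale domino_region =
  fixes D :: "cell set" and a b :: int
  assumes finite_D: "finite D"
    and left_of_D: "\<And>p. p \<in> D \<Longrightarrow> a < fst p"
    and right_of_D: "\<And>p. p \<in> D \<Longrightarrow> fst p < b"
    and complement_connected_D: "complement_connected D"
begin

lemma left_outside: "x \<le> a \<Longrightarrow> (x, y) \<notin> D"
  using left_of_D[of "(x, y)"] by auto

lemma right_outside: "b \<le> x \<Longrightarrow> (x, y) \<notin> D"
  using right_of_D[of "(x, y)"] by auto

lemma inner_vertex_bounds: "inner_vertex D v \<Longrightarrow> a + 1 < fst v \<and> fst v < b"
  unfolding inner_vertex_def using left_of_D[of "(fst v - 1, snd v)"] right_of_D[of v] by auto

lemma finite_inner_vertices: "finite {v. inner_vertex D v}"
  by (rule finite_subset[OF _ finite_D]) (auto simp: inner_vertex_def)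

text \<open>Each row_flux a T alone is no height function, since curl T does not vanish off D;
  but two tilings of D have the same curl, so the difference below is a potential for
  step_flux T1 - step_flux T2.\<close>

definition height_diff :: "cell set set \<Rightarrow> cell set set \<Rightarrow> cell \<Rightarrow> int" where
  "height_diff T1 T2 v = row_flux a T1 (fst v) (snd v) - row_flux a T2 (fst v) (snd v)"

lemma height_diff_swap: "height_diff T2 T1 v = - height_diff T1 T2 v"
  by (simp add: height_diff_def)

context
  fixes T1 T2 assumes T1: "tiling domino D T1" and T2: "tiling domino D T2"
begin

lemma height_diff_step_right:
  "height_diff T1 T2 (x + 1, y) - height_diff T1 T2 (x, y) = hflux T1 x y - hflux T2 x y"
proof (cases "a \<le> x")
  case True
  then show ?thesis by (simp add: height_diff_def row_flux_step_right)
next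
  case False
  then show ?thesis
    using hflux_outside[OF T1, of x y] hflux_outside[OF T2, of x y] left_outside[of x y]
    by (simp add: height_diff_def row_flux_def)
qed

lemma height_diff_step_up:
  "height_diff T1 T2 (x, y + 1) - height_diff T1 T2 (x, y) = vflux T1 x y - vflux T2 x y"
proof (cases "a \<le> x")
  case True
  have "vflux T1 a y = vflux T2 a y"
    using vflux_outside[OF T1, of a y] vflux_outside[OF T2, of a y] left_outside[of a y] by simp
  moreover have "curl T1 i y = curl T2 i y" for i
    using curl_tiling[OF T1] curl_tiling[OF T2] by simp
  ultimately show ?thesis
    using True by (simp add: height_diff_def row_flux_step_up)
next
  case False
  then show ?thesis
    using vflux_outside[OF T1, of x y] vflux_outside[OF T2, of x y] left_outside[of x y]
    by (simp add: height_diff_def row_flux_def)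
qed

lemma step_flux_diff:
  assumes "adjacent v w"
  shows "step_flux T1 v w - step_flux T2 v w = height_diff T1 T2 w - height_diff T1 T2 v"
proof -
  obtain x y where v: "v = (x, y)" by (cases v)
  from assms show ?thesis unfolding adjacent_iff
  proof (elim disjE)
    assume w: "w = (fst v + 1, snd v)"
    show ?thesis using height_diff_step_right[of x y] by (simp add: step_flux_def v w)
  next
    assume w: "w = (fst v - 1, snd v)"
    show ?thesis using height_diff_step_right[of "x - 1" y] by (simp add: step_flux_def v w)
  next
    assume w: "w = (fst v, snd v + 1)"
    show ?thesis using height_diff_step_up[of x y] by (simp add: step_flux_def v w)
  next
    assume w: "w = (fst v, snd v - 1)"
    show ?thesis using height_diff_step_up[of x "y - 1"] by (simp add: step_flux_def v w)
  qed
qed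

lemma height_diff_around_outside_cell:
  assumes "(x, y) \<notin> D"
  shows "height_diff T1 T2 (x + 1, y) = height_diff T1 T2 (x, y)"
    and "height_diff T1 T2 (x, y + 1) = height_diff T1 T2 (x, y)"
    and "height_diff T1 T2 (x + 1, y + 1) = height_diff T1 T2 (x, y)"
proof -
  show "height_diff T1 T2 (x + 1, y) = height_diff T1 T2 (x, y)"
    using height_diff_step_right[of x y] hflux_outside[OF T1, of x y] hflux_outside[OF T2, of x y] assms
    by simp
  moreover show up: "height_diff T1 T2 (x, y + 1) = height_diff T1 T2 (x, y)"
    using height_diff_step_up[of x y] vflux_outside[OF T1, of x y] vflux_outside[OF T2, of x y] assms
    by simp
  ultimately show "height_diff T1 T2 (x + 1, y + 1) = height_diff T1 T2 (x, y)"
    using height_diff_step_right[of x "y + 1"] hflux_outside[OF T1, of x "y + 1"]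
      hflux_outside[OF T2, of x "y + 1"] assms
    by simp
qed

lemma height_diff_adjacent_outside:
  assumes "c \<notin> D" "c' \<notin> D" "adjacent c c'"
  shows "height_diff T1 T2 c = height_diff T1 T2 c'"
proof -
  obtain x y where c: "c = (x, y)" by (cases c)
  from assms(3) show ?thesis unfolding adjacent_iff
  proof (elim disjE)
    assume "c' = (fst c + 1, snd c)"
    then show ?thesis using height_diff_around_outside_cell(1)[of x y] assms(1) c by simp
  next
    assume "c' = (fst c - 1, snd c)"
    then show ?thesis using height_diff_around_outside_cell(1)[of "x - 1" y] assms(2) c by simp
  next
    assume "c' = (fst c, snd c + 1)"
    then show ?thesis using height_diff_around_outside_cell(2)[of x y] assms(1) c by simp
  next
    assume "c' = (fst c, snd c - 1)"
    then show ?thesis using height_diff_around_outside_cell(2)[of x "y - 1"] assms(2) c by simp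
  qed
qed

lemma height_diff_outside: "c \<notin> D \<Longrightarrow> height_diff T1 T2 c = 0"
proof -
  assume c: "c \<notin> D"
  have "(a - 1, 0) \<notin> D" by (rule left_outside) simp
  then have "height_diff T1 T2 c = height_diff T1 T2 (a - 1, 0)"
    by (intro complement_connected_constant[OF complement_connected_D c, where f = "height_diff T1 T2"]
        height_diff_adjacent_outside)
  also have "\<dots> = 0" by (simp add: height_diff_def row_flux_def)
  finally show ?thesis .
qed

lemma height_diff_not_inner: "\<not> inner_vertex D v \<Longrightarrow> height_diff T1 T2 v = 0"
proof -
  assume "\<not> inner_vertex D v"
  moreover obtain x y where v: "v = (x, y)" by (cases v)
  ultimately consider "(x, y) \<notin> D" | "(x - 1, y) \<notin> D" | "(x, y - 1) \<notin> D" | "(x - 1, y - 1) \<notin> D"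
    unfolding inner_vertex_def by auto
  then show ?thesis
  proof cases
    case 1 then show ?thesis using height_diff_outside v by simp
  next
    case 2 then show ?thesis using height_diff_around_outside_cell(1) height_diff_outside v by fastforce
  next
    case 3 then show ?thesis using height_diff_around_outside_cell(2) height_diff_outside v by fastforce
  next
    case 4 then show ?thesis using height_diff_around_outside_cell(3) height_diff_outside v by fastforce
  qed
qed

lemma height_diff_dvd_4: "4 dvd height_diff T1 T2 v"
proof -
  have "4 dvd hflux T1 i (snd v) - hflux T2 i (snd v)" for i
    using checker_cases[of i "snd v"] unfolding hflux_def by auto
  then show ?thesis
    unfolding height_diff_def row_flux_def sum_subtractf[symmetric] by (rule dvd_sum)
qed

end

lemma winding_outside:
  assumes W: "closed_walk D p n" and c: "c \<notin> D"
  shows "winding p n c = 0"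
proof -
  have "(b, 0) \<notin> D" by (rule right_outside) simp
  then have "winding p n c = winding p n (b, 0)"
    by (intro complement_connected_constant[OF complement_connected_D c, where f = "winding p n"]
        winding_adjacent_outside[OF W])
  also have "\<dots> = 0"
  proof -
    have "crossing (b, 0) (p k) (p (Suc k)) = 0" if "k < n" for k
      using inner_vertex_bounds[of "p k"] W that by (auto simp: crossing_def closed_walk_def)
    then show ?thesis unfolding winding_def by simp
  qed
  finally show ?thesis .
qed

definition cell_weight :: "cell set set \<Rightarrow> cell \<Rightarrow> int" where
  "cell_weight T c = (if fst c = a - 1 then vflux T a (snd c) else curl T (fst c) (snd c))"

lemma cell_weight_row_sum:
  assumes xy: "(x, y) \<in> D"
  shows "(\<Sum>y'\<in>snd ` D. \<Sum>i\<in>{a - 1..<b}. cell_weight T (i, y') * (if y' = y \<and> i < x then 1 else 0)) =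
    vflux T a y + (\<Sum>i\<in>{a..<x}. curl T i y)"
proof -
  have x: "x < b" "a < x" using right_of_D[OF xy] left_of_D[OF xy] by auto
  have "(\<Sum>y'\<in>snd ` D. \<Sum>i\<in>{a - 1..<b}. cell_weight T (i, y') * (if y' = y \<and> i < x then 1 else 0)) =
      (\<Sum>y'\<in>snd ` D. if y' = y then (\<Sum>i\<in>{a - 1..<b}. if i < x then cell_weight T (i, y) else 0) else 0)"
    by (rule sum.cong) (auto intro!: sum.cong)
  also have "\<dots> = (\<Sum>i\<in>{a - 1..<b}. if i < x then cell_weight T (i, y) else 0)"
    using xy by (simp add: sum.delta[OF finite_imageI[OF finite_D]] image_iff) (metis snd_conv)
  also have "\<dots> = (\<Sum>i\<in>{i\<in>{a - 1..<b}. i < x}. cell_weight T (i, y))"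
    by (rule sum.inter_filter[symmetric]) simp
  also have "{i\<in>{a - 1..<b}. i < x} = insert (a - 1) {a..<x}" using x by auto
  also have "(\<Sum>i\<in>insert (a - 1) {a..<x}. cell_weight T (i, y)) =
      cell_weight T (a - 1, y) + (\<Sum>i\<in>{a..<x}. cell_weight T (i, y))"
    by simp
  also have "(\<Sum>i\<in>{a..<x}. cell_weight T (i, y)) = (\<Sum>i\<in>{a..<x}. curl T i y)"
    by (rule sum.cong) (auto simp: cell_weight_def)
  finally show ?thesis by (simp add: cell_weight_def)
qed

text \<open>A discrete Green formula: a step is the increment of row_flux plus the weights of the
  cells whose ray it crosses; the column a - 1 left of D carries the boundary term.\<close>

lemma step_flux_decomposition:
  assumes v: "inner_vertex D v" and w: "inner_vertex D w" and "adjacent v w"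
  shows "step_flux T v w = row_flux a T (fst w) (snd w) - row_flux a T (fst v) (snd v) +
    (\<Sum>y'\<in>snd ` D. \<Sum>i\<in>{a - 1..<b}. cell_weight T (i, y') * crossing (i, y') v w)"
proof -
  obtain x y where vv: "v = (x, y)" by (cases v)
  have ax: "a \<le> x - 1" using inner_vertex_bounds[OF v] vv by simp
  from assms(3) vv show ?thesis unfolding adjacent_iff
  proof (elim disjE)
    assume ww: "w = (fst v + 1, snd v)"
    have "crossing (i, y') v w = 0" for i y' using vv ww by (simp add: crossing_def)
    then show ?thesis using row_flux_step_right[of a x T y] ax vv ww by (simp add: step_flux_def)
  next
    assume ww: "w = (fst v - 1, snd v)"
    have "crossing (i, y') v w = 0" for i y' using vv ww by (simp add: crossing_def)
    then show ?thesis using row_flux_step_right[of a "x - 1" T y] ax vv ww by (simp add: step_flux_def)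
  next
    assume ww: "w = (fst v, snd v + 1)"
    have cross: "crossing (i, y') (x, y) (x, y + 1) = (if y' = y \<and> i < x then 1 else 0)" for i y'
      by (auto simp: crossing_def)
    have "(x, y) \<in> D" using v vv by (simp add: inner_vertex_def)
    then show ?thesis
      using row_flux_step_up[of a x T y] ax vv ww cell_weight_row_sum[of x y]
      by (simp add: step_flux_def cross)
  next
    assume ww: "w = (fst v, snd v - 1)"
    have cross: "crossing (i, y') (x, y) (x, y - 1) = - (if y' = y - 1 \<and> i < x then 1 else 0)" for i y'
      by (auto simp: crossing_def)
    have "(x, y - 1) \<in> D" using w vv ww by (simp add: inner_vertex_def)
    then show ?thesis
      using row_flux_step_up[of a x T "y - 1"] ax vv ww cell_weight_row_sum[of x "y - 1"]
      by (simp add: step_flux_def cross sum_negf)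
  qed
qed

lemma closed_walk_circulation:
  assumes T: "tiling domino D T" and W: "closed_walk D p n"
  shows "(\<Sum>k<n. step_flux T (p k) (p (Suc k))) = 0"
proof -
  let ?Y = "snd ` D" and ?I = "{a - 1..<b}"
  have "(\<Sum>k<n. step_flux T (p k) (p (Suc k))) =
      (\<Sum>k<n. row_flux a T (fst (p (Suc k))) (snd (p (Suc k))) - row_flux a T (fst (p k)) (snd (p k))) +
      (\<Sum>k<n. \<Sum>y'\<in>?Y. \<Sum>i\<in>?I. cell_weight T (i, y') * crossing (i, y') (p k) (p (Suc k)))"
    unfolding sum.distrib[symmetric]
    by (rule sum.cong) (use W in \<open>auto intro!: step_flux_decomposition simp: closed_walk_def\<close>)
  also have "(\<Sum>k<n. row_flux a T (fst (p (Suc k))) (snd (p (Suc k))) - row_flux a T (fst (p k)) (snd (p k))) = 0"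
    using closed_walk_telescope[OF W, of "\<lambda>v. row_flux a T (fst v) (snd v)"] by simp
  also have "(\<Sum>k<n. \<Sum>y'\<in>?Y. \<Sum>i\<in>?I. cell_weight T (i, y') * crossing (i, y') (p k) (p (Suc k))) =
      (\<Sum>y'\<in>?Y. \<Sum>i\<in>?I. cell_weight T (i, y') * winding p n (i, y'))"
    unfolding winding_def sum_distrib_left
    by (subst sum.swap) (simp add: sum.swap[of _ ?I])
  also have "\<dots> = 0"
  proof (intro sum.neutral ballI)
    fix y' i assume "i \<in> ?I"
    show "cell_weight T (i, y') * winding p n (i, y') = 0"
    proof (cases "(i, y') \<in> D")
      case True
      then have "i \<noteq> a - 1" using left_of_D[OF True] by auto
      then show ?thesis using curl_tiling[OF T] True by (simp add: cell_weight_def)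
    next
      case False
      then show ?thesis using winding_outside[OF W] by simp
    qed
  qed
  finally show ?thesis by simp
qed

lemma no_positive_flux_cycle:
  assumes T: "tiling domino D T"
    and S: "finite S" "S \<noteq> {}" "\<And>v. v \<in> S \<Longrightarrow> inner_vertex D v"
    and up: "\<And>v. v \<in> S \<Longrightarrow> \<exists>w\<in>S. adjacent v w \<and> 0 < step_flux T v w"
  shows False
proof -
  obtain next_vertex where nx: "\<And>v. v \<in> S \<Longrightarrow>
      next_vertex v \<in> S \<and> adjacent v (next_vertex v) \<and> 0 < step_flux T v (next_vertex v)"
    using up by metis
  obtain v0 where v0: "v0 \<in> S" using S by blast
  define q where "q k = (next_vertex ^^ k) v0" for k
  have qS: "q k \<in> S" for k by (induction k) (auto simp: q_def v0 nx)
  have q_Suc: "q (Suc k) = next_vertex (q k)" for k by (simp add: q_def)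
  have "\<not> inj_on q {..card S}"
  proof
    assume "inj_on q {..card S}"
    then have "card (q ` {..card S}) = Suc (card S)" by (simp add: card_image)
    moreover have "card (q ` {..card S}) \<le> card S" by (rule card_mono[OF S(1)]) (auto intro: qS)
    ultimately show False by simp
  qed
  then obtain i j where ij: "i < j" "q i = q j"
    unfolding inj_on_def by (metis linorder_neqE_nat)
  define p where "p k = q (i + k)" for k
  have W: "closed_walk D p (j - i)" unfolding closed_walk_def
    using ij nx[OF qS] S(3)[OF qS] by (simp add: p_def q_Suc)
  have "0 < (\<Sum>k<j - i. step_flux T (p k) (p (Suc k)))"
    using ij nx[OF qS] by (intro sum_pos) (auto simp: p_def q_Suc lessThan_empty_iff)
  then show False using closed_walk_circulation[OF T W] by simp
qed

context
  fixes T1 T2 assumes T1: "tiling domino D T1" and T2: "tiling domino D T2"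
begin

lemma exists_flippable_vertex:
  assumes pos: "0 < height_diff T1 T2 v0"
  shows "\<exists>v. inner_vertex D v \<and> 0 < height_diff T1 T2 v \<and> (\<forall>w. adjacent v w \<longrightarrow> step_flux T1 v w < 0)"
proof -
  let ?V = "{v. inner_vertex D v}" and ?g = "height_diff T1 T2"
  define M where "M = Max (?g ` ?V)"
  have "v0 \<in> ?V" using pos height_diff_not_inner[OF T1 T2, of v0] by (metis less_irrefl mem_Collect_eq)
  then have "?g v0 \<le> M" "M \<in> ?g ` ?V"
    unfolding M_def using finite_inner_vertices by (auto intro!: Max_in)
  then have M_pos: "0 < M" using pos by simp
  have M_max: "?g w \<le> M" for w
    using height_diff_not_inner[OF T1 T2, of w] M_pos finite_inner_vertices unfolding M_def
    by (cases "inner_vertex D w") auto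
  define S where "S = {v. inner_vertex D v \<and> ?g v = M}"
  have "finite S" using finite_inner_vertices by (rule finite_subset[rotated]) (auto simp: S_def)
  moreover have "S \<noteq> {}" using \<open>M \<in> ?g ` ?V\<close> by (auto simp: S_def)
  ultimately obtain v where "v \<in> S" and sink: "\<And>w. w \<in> S \<Longrightarrow> adjacent v w \<Longrightarrow> step_flux T1 v w \<le> 0"
    using no_positive_flux_cycle[OF T1, of S] by (force simp: S_def)
  have "step_flux T1 v w < 0" if w: "adjacent v w" for w
  proof (rule ccontr)
    assume "\<not> step_flux T1 v w < 0"
    obtain s where s: "s = 1 \<or> s = -1" "\<And>T. step_flux T v w = s \<or> step_flux T v w = -3 * s"
      using step_flux_sign[OF w] by blast
    have pos_step: "0 < step_flux T1 v w" using s(1) s(2)[of T1] \<open>\<not> step_flux T1 v w < 0\<close> by auto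
    have gv: "?g v = M" using \<open>v \<in> S\<close> by (simp add: S_def)
    have "step_flux T2 v w = step_flux T1 v w"
      using pos_step s(1) s(2)[of T1] s(2)[of T2] step_flux_diff[OF T1 T2 w] gv M_max[of w] by auto
    then have "?g w = M" using step_flux_diff[OF T1 T2 w] gv by simp
    then have "w \<in> S" using height_diff_not_inner[OF T1 T2, of w] M_pos by (auto simp: S_def)
    then show False using sink[OF _ w] pos_step by simp
  qed
  moreover have "inner_vertex D v" "0 < height_diff T1 T2 v"
    using \<open>v \<in> S\<close> M_pos by (auto simp: S_def)
  ultimately show ?thesis by blast
qed

lemma tilings_eq_if_height_diff_zero:
  assumes "\<And>v. height_diff T1 T2 v = 0"
  shows "T1 = T2"
proof -
  have horizontal: "{(x, y), (x, y - 1)} \<in> T1 \<longleftrightarrow> {(x, y), (x, y - 1)} \<in> T2" for x y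
  proof -
    have "hflux T1 x y = hflux T2 x y" using height_diff_step_right[OF T1 T2, of x y] assms by simp
    then show ?thesis using checker_cases[of x y] unfolding hflux_def by (auto split: if_splits)
  qed
  have vertical: "{(x - 1, y), (x, y)} \<in> T1 \<longleftrightarrow> {(x - 1, y), (x, y)} \<in> T2" for x y
  proof -
    have "vflux T1 x y = vflux T2 x y" using height_diff_step_up[OF T1 T2, of x y] assms by simp
    then show ?thesis using checker_cases[of "x - 1" y] unfolding vflux_def by (auto split: if_splits)
  qed
  have same: "{p, q} \<in> T1 \<longleftrightarrow> {p, q} \<in> T2" if "adjacent p q" for p q
  proof -
    obtain x y where p: "p = (x, y)" by (cases p)
    from that show ?thesis unfolding adjacent_iff
    proof (elim disjE)
      assume "q = (fst p + 1, snd p)" then show ?thesis using vertical[of "x + 1" y] p by simp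
    next
      assume "q = (fst p - 1, snd p)" then show ?thesis using vertical[of x y] p by (simp add: insert_commute)
    next
      assume "q = (fst p, snd p + 1)" then show ?thesis using horizontal[of x "y + 1"] p by (simp add: insert_commute)
    next
      assume "q = (fst p, snd p - 1)" then show ?thesis using horizontal[of x y] p by simp
    qed
  qed
  have "d \<in> T1 \<longleftrightarrow> d \<in> T2" if "domino d" for d
    using that same unfolding domino_def by blast
  then show ?thesis
    using tiling_tile_property[OF T1] tiling_tile_property[OF T2] by blast
qed

end

lemma height_diff_after_flip:
  assumes change: "\<And>i j. hflux T1' i j - hflux T1 i j =
      (if j = y \<and> i = x - 1 then -4 else 0) + (if j = y \<and> i = x then 4 else 0)"
    and ax: "a \<le> x - 1"
  shows "height_diff T1' T2 w = height_diff T1 T2 w - (if w = (x, y) then 4 else 0)"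
proof -
  obtain x' y' where w: "w = (x', y')" by (cases w)
  have "height_diff T1' T2 w - height_diff T1 T2 w = (\<Sum>i\<in>{a..<x'}. hflux T1' i y' - hflux T1 i y')"
    unfolding height_diff_def row_flux_def w by (simp add: sum_subtractf)
  also have "\<dots> = (\<Sum>i\<in>{a..<x'}. (if y' = y \<and> i = x - 1 then -4 else 0) + (if y' = y \<and> i = x then 4 else 0))"
    using change by simp
  also have "\<dots> = (if y' = y \<and> x - 1 \<in> {a..<x'} then -4 else 0) + (if y' = y \<and> x \<in> {a..<x'} then 4 else 0)"
  proof (cases "y' = y")
    case True
    have "(\<Sum>i\<in>{a..<x'}. (if y' = y \<and> i = x - 1 then -4 else 0) + (if y' = y \<and> i = x then 4 else 0)) =
        (\<Sum>i\<in>{a..<x'}. (if i = x - 1 then -4 else 0::int)) + (\<Sum>i\<in>{a..<x'}. (if i = x then 4 else 0::int))"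
      using True by (simp add: sum.distrib)
    also have "\<dots> = (if x - 1 \<in> {a..<x'} then -4 else 0::int) + (if x \<in> {a..<x'} then 4 else 0)"
      by (simp only: sum.delta finite_atLeastLessThan_int)
    finally show ?thesis using True by simp
  qed simp
  also have "\<dots> = - (if w = (x, y) then 4 else 0)" using ax w by auto
  finally show ?thesis by simp
qed

definition height_distance :: "cell set set \<Rightarrow> cell set set \<Rightarrow> int" where
  "height_distance T1 T2 = (\<Sum>v\<in>{v. inner_vertex D v}. \<bar>height_diff T1 T2 v\<bar>)"

lemma height_distance_swap: "height_distance T2 T1 = height_distance T1 T2"
  unfolding height_distance_def height_diff_swap[of T2 T1] by simp

lemma height_distance_nonneg: "0 \<le> height_distance T1 T2"
  unfolding height_distance_def by (simp add: sum_nonneg)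

lemma height_distance_decrease:
  assumes T1: "tiling domino D T1" and T2: "tiling domino D T2" and "0 < height_diff T1 T2 v0"
  shows "\<exists>T1'. tiling domino D T1' \<and> domino_flip T1 T1' \<and> height_distance T1' T2 < height_distance T1 T2"
proof -
  let ?V = "{v. inner_vertex D v}" and ?g = "height_diff T1 T2"
  obtain x y where v: "inner_vertex D (x, y)" "0 < ?g (x, y)"
    and down: "\<And>w. adjacent (x, y) w \<Longrightarrow> step_flux T1 (x, y) w < 0"
    using exists_flippable_vertex[OF T1 T2 assms(3)] by auto
  obtain T1' where flip: "domino_flip T1 T1'"
    and change: "\<And>i j. hflux T1' i j - hflux T1 i j =
      (if j = y \<and> i = x - 1 then -4 else 0) + (if j = y \<and> i = x then 4 else 0)"
    using flip_at_local_max[OF T1 down] by blast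
  have "a \<le> x - 1" using inner_vertex_bounds[OF v(1)] by simp
  note new = height_diff_after_flip[OF change this]
  have "4 \<le> ?g (x, y)" using v(2) height_diff_dvd_4[OF T1 T2, of "(x, y)"] by (auto elim!: dvdE)
  have "height_distance T1' T2 = (\<Sum>w\<in>?V. \<bar>?g w - (if w = (x, y) then 4 else 0)\<bar>)"
    unfolding height_distance_def new ..
  also have "\<dots> = \<bar>?g (x, y) - 4\<bar> + (\<Sum>w\<in>?V - {(x, y)}. \<bar>?g w\<bar>)"
    using v(1) finite_inner_vertices by (simp add: sum.remove)
  also have "\<dots> = height_distance T1 T2 - 4"
    unfolding height_distance_def using v(1) finite_inner_vertices \<open>4 \<le> ?g (x, y)\<close>
    by (simp add: sum.remove)
  finally show ?thesis using tiling_domino_flip[OF T1 flip] flip by auto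
qed

theorem domino_tilings_flip_connected:
  "tiling domino D T1 \<Longrightarrow> tiling domino D T2 \<Longrightarrow> domino_flip\<^sup>*\<^sup>* T1 T2"
proof (induction "nat (height_distance T1 T2)" arbitrary: T1 T2 rule: less_induct)
  case less
  note T1 = less.prems(1) and T2 = less.prems(2)
  show ?case
  proof (cases "T1 = T2")
    case True
    then show ?thesis by simp
  next
    case False
    then obtain v where v: "height_diff T1 T2 v \<noteq> 0"
      using tilings_eq_if_height_diff_zero[OF T1 T2] by blast
    show ?thesis
    proof (cases "0 < height_diff T1 T2 v")
      case True
      then obtain T1' where T1': "tiling domino D T1'" "domino_flip T1 T1'"
        "height_distance T1' T2 < height_distance T1 T2"
        using height_distance_decrease[OF T1 T2] by blast
      then have "domino_flip\<^sup>*\<^sup>* T1' T2"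
        using less.hyps T2 height_distance_nonneg[of T1' T2] by simp
      then show ?thesis using T1'(2) by (simp add: converse_rtranclp_into_rtranclp)
    next
      case False
      then have "0 < height_diff T2 T1 v" using v height_diff_swap[of T2 T1 v] by simp
      then obtain T2' where T2': "tiling domino D T2'" "domino_flip T2 T2'"
        "height_distance T1 T2' < height_distance T1 T2"
        using height_distance_decrease[OF T2 T1] height_distance_swap by metis
      then have "domino_flip\<^sup>*\<^sup>* T1 T2'"
        using less.hyps T1 height_distance_nonneg[of T1 T2'] by simp
      then show ?thesis using domino_flip_sym[OF T2 T2'(2)] by (simp add: rtranclp.rtrancl_into_rtrancl)
    qed
  qed
qed

end

section \<open>The complement of a quadriculated disk\<close>

lemma unit_square_eq:
  "unit_square p = {real_of_int (fst p)..real_of_int (fst p) + 1} \<times> {real_of_int (snd p)..real_of_int (snd p) + 1}"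
  by (auto simp: unit_square_def)

lemma compact_squares_union: "finite D \<Longrightarrow> compact (squares_union D)"
  unfolding squares_union_def unit_square_eq by (intro compact_UN) (auto intro!: compact_Times)

text \<open>Close to x only the squares containing x matter, and they meet a small ball around x in
  convex sets all containing x.\<close>

lemma locally_path_connected_squares_union:
  assumes "finite D"
  shows "locally path_connected (squares_union D)"
proof (rule locally_path_connected_1)
  let ?S = "squares_union D"
  fix V x assume V: "openin (top_of_set ?S) V" and "x \<in> V"
  obtain e where e: "e > 0" "\<And>x'. x' \<in> ?S \<Longrightarrow> dist x' x < e \<Longrightarrow> x' \<in> V"
    using V \<open>x \<in> V\<close> unfolding openin_euclidean_subtopology_iff by blast
  let ?K = "\<Union>p\<in>{p\<in>D. x \<notin> unit_square p}. unit_square p"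
  have "closed ?K"
    using assms by (intro closed_UN) (auto simp: unit_square_eq intro: closed_Times)
  then obtain r where r: "r > 0" "ball x r \<subseteq> - ?K"
    using open_contains_ball_eq[of "- ?K"] by blast
  define d where "d = min e r"
  define U where "U = ?S \<inter> ball x d"
  have U_eq: "U = (\<Union>p\<in>{p\<in>D. x \<in> unit_square p}. ball x d \<inter> unit_square p)"
  proof
    show "U \<subseteq> (\<Union>p\<in>{p\<in>D. x \<in> unit_square p}. ball x d \<inter> unit_square p)"
    proof
      fix y assume "y \<in> U"
      then obtain p where p: "p \<in> D" "y \<in> unit_square p" "y \<in> ball x d"
        by (auto simp: U_def squares_union_def)
      then have "y \<notin> ?K" using r(2) by (auto simp: d_def)
      then show "y \<in> (\<Union>p\<in>{p\<in>D. x \<in> unit_square p}. ball x d \<inter> unit_square p)"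
        using p by blast
    qed
  qed (auto simp: U_def squares_union_def)
  show "\<exists>U. openin (top_of_set ?S) U \<and> path_connected U \<and> x \<in> U \<and> U \<subseteq> V"
  proof (intro exI conjI)
    show "openin (top_of_set ?S) U" unfolding U_def by (rule openin_open_Int) simp
    show "x \<in> U" using \<open>x \<in> V\<close> openin_subset[OF V] e r by (auto simp: U_def d_def)
    show "U \<subseteq> V" using e by (auto simp: U_def d_def dist_commute)
    show "path_connected U" unfolding U_eq
      using e r by (intro path_connected_UNION[where z = x])
        (auto intro!: convex_imp_path_connected convex_Int simp: unit_square_eq convex_Times d_def)
  qed
qed

definition complex_of_pair :: "real \<times> real \<Rightarrow> complex" where
  "complex_of_pair p = Complex (fst p) (snd p)"

definition pair_of_complex :: "complex \<Rightarrow> real \<times> real" where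
  "pair_of_complex z = (Re z, Im z)"

lemma pair_of_complex_of_pair [simp]: "pair_of_complex (complex_of_pair p) = p"
  and complex_of_pair_of_complex [simp]: "complex_of_pair (pair_of_complex z) = z"
  by (simp_all add: pair_of_complex_def complex_of_pair_def)

lemma continuous_on_complex_of_pair: "continuous_on A complex_of_pair"
  and continuous_on_pair_of_complex: "continuous_on B pair_of_complex"
  unfolding complex_of_pair_def pair_of_complex_def by (intro continuous_intros)+

lemma connected_complement_squares_union:
  assumes fin: "finite D" and sc: "simply_connected (squares_union D)"
  shows "connected (- squares_union D)"
proof -
  let ?S = "squares_union D"
  have "Borsukian ?S"
    by (rule simply_connected_imp_Borsukian[OF sc locally_path_connected_squares_union[OF fin]])
  \<comment> \<open>The library states Borsuk's separation theorem for subsets of the complex plane.\<close>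
  moreover have "?S homeomorphic (complex_of_pair ` ?S)"
    unfolding homeomorphic_def homeomorphism_def
    by (intro exI[of _ complex_of_pair] exI[of _ pair_of_complex])
       (auto simp: image_image continuous_on_complex_of_pair continuous_on_pair_of_complex)
  ultimately have "Borsukian (complex_of_pair ` ?S)" by (rule homeomorphic_Borsukian)
  moreover have "compact (complex_of_pair ` ?S)"
    by (rule compact_continuous_image[OF continuous_on_complex_of_pair compact_squares_union[OF fin]])
  ultimately have "connected (- (complex_of_pair ` ?S))"
    using Borsukian_separation_compact by blast
  moreover have "bij pair_of_complex"
    by (rule o_bij[of complex_of_pair]) (simp_all add: fun_eq_iff)
  then have "- ?S = pair_of_complex ` (- (complex_of_pair ` ?S))"
    by (simp add: bij_image_Compl_eq image_image)
  ultimately show ?thesis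
    using connected_continuous_image[OF continuous_on_pair_of_complex] by metis
qed

definition cell_of :: "real \<times> real \<Rightarrow> cell" where
  "cell_of z = (\<lfloor>fst z\<rfloor>, \<lfloor>snd z\<rfloor>)"

definition centre :: "cell \<Rightarrow> real \<times> real" where
  "centre c = (real_of_int (fst c) + 1/2, real_of_int (snd c) + 1/2)"

lemma cell_of_centre: "cell_of (centre c) = c"
proof -
  have "\<lfloor>real_of_int k + 1/2\<rfloor> = k" for k by linarith
  then show ?thesis by (simp add: cell_of_def centre_def)
qed

lemma centre_in_unit_square: "centre c \<in> unit_square p \<longleftrightarrow> p = c"
proof -
  have "real_of_int (fst p) \<le> real_of_int (fst c) + 1/2 \<and> real_of_int (fst c) + 1/2 \<le> real_of_int (fst p) + 1 \<longleftrightarrow> fst p = fst c"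
    "real_of_int (snd p) \<le> real_of_int (snd c) + 1/2 \<and> real_of_int (snd c) + 1/2 \<le> real_of_int (snd p) + 1 \<longleftrightarrow> snd p = snd c"
    by linarith+
  then show ?thesis by (auto simp: unit_square_def centre_def prod_eq_iff)
qed

lemma centre_in_squares_union: "centre c \<in> squares_union D \<longleftrightarrow> c \<in> D"
  by (auto simp: squares_union_def centre_in_unit_square)

definition floor_radius :: "real \<Rightarrow> real" where
  "floor_radius t = (if t = of_int \<lfloor>t\<rfloor> then 1 else min (t - of_int \<lfloor>t\<rfloor>) (of_int \<lfloor>t\<rfloor> + 1 - t))"

lemma floor_radius_pos: "0 < floor_radius t"
  unfolding floor_radius_def by (auto simp: of_int_floor_le order.strict_iff_order) linarith

lemma floor_near:
  assumes "\<bar>s - t\<bar> < floor_radius t"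
  shows "\<lfloor>s\<rfloor> = \<lfloor>t\<rfloor> \<or> (\<lfloor>s\<rfloor> = \<lfloor>t\<rfloor> - 1 \<and> t = of_int \<lfloor>t\<rfloor>)"
proof (cases "t = of_int \<lfloor>t\<rfloor>")
  case True
  then have "t - 1 < s" "s < t + 1" using assms by (auto simp: floor_radius_def)
  then show ?thesis using True by linarith
next
  case False
  then have "of_int \<lfloor>t\<rfloor> < s" "s < of_int \<lfloor>t\<rfloor> + 1" using assms by (auto simp: floor_radius_def)
  then show ?thesis by linarith
qed

lemma complement_step_rtrancl_sym:
  "(c, c') \<in> (complement_step D)\<^sup>* \<Longrightarrow> (c', c) \<in> (complement_step D)\<^sup>*"
proof (induction rule: rtrancl_induct)
  case (step y z)
  then have "(z, y) \<in> complement_step D" by (auto simp: complement_step_def adjacent_sym)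
  then show ?case using step.IH by (rule converse_rtrancl_into_rtrancl)
qed simp

text \<open>The cells of the points near z all contain z in their closure, so they lie outside D,
  and they are reached from the cell of z by at most one step in each coordinate.\<close>

lemma complement_step_near:
  assumes z: "z \<notin> squares_union D"
  shows "\<exists>e>0. \<forall>w. dist w z < e \<longrightarrow> (cell_of z, cell_of w) \<in> (complement_step D)\<^sup>*"
proof -
  obtain s t where zz: "z = (s, t)" by (cases z)
  define e where "e = min (floor_radius s) (floor_radius t)"
  have outside: "(i, j) \<notin> D"
    if "\<lfloor>s'\<rfloor> = \<lfloor>s\<rfloor> \<or> (\<lfloor>s'\<rfloor> = \<lfloor>s\<rfloor> - 1 \<and> s = of_int \<lfloor>s\<rfloor>)" "i = \<lfloor>s'\<rfloor>"
      "\<lfloor>t'\<rfloor> = \<lfloor>t\<rfloor> \<or> (\<lfloor>t'\<rfloor> = \<lfloor>t\<rfloor> - 1 \<and> t = of_int \<lfloor>t\<rfloor>)" "j = \<lfloor>t'\<rfloor>" for s' t' i j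
  proof
    assume "(i, j) \<in> D"
    moreover have "z \<in> unit_square (i, j)"
      using that unfolding unit_square_def zz by (auto; linarith)
    ultimately show False using z by (auto simp: squares_union_def)
  qed
  have "(cell_of z, cell_of w) \<in> (complement_step D)\<^sup>*" if "dist w z < e" for w
  proof -
    obtain s' t' where ww: "w = (s', t')" by (cases w)
    have "\<bar>s' - s\<bar> < floor_radius s" "\<bar>t' - t\<bar> < floor_radius t"
      using dist_fst_le[of w z] dist_snd_le[of w z] that ww zz by (auto simp: e_def dist_real_def)
    then have s': "\<lfloor>s'\<rfloor> = \<lfloor>s\<rfloor> \<or> (\<lfloor>s'\<rfloor> = \<lfloor>s\<rfloor> - 1 \<and> s = of_int \<lfloor>s\<rfloor>)"
      and t': "\<lfloor>t'\<rfloor> = \<lfloor>t\<rfloor> \<or> (\<lfloor>t'\<rfloor> = \<lfloor>t\<rfloor> - 1 \<and> t = of_int \<lfloor>t\<rfloor>)"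
      by (auto dest: floor_near)
    have "((\<lfloor>s\<rfloor>, \<lfloor>t\<rfloor>), (\<lfloor>s'\<rfloor>, \<lfloor>t\<rfloor>)) \<in> (complement_step D)\<^sup>*"
      using s' outside[OF _ refl _ refl, of s t] outside[OF s' refl _ refl, of t]
      by (auto simp: complement_step_def adjacent_def)
    moreover have "((\<lfloor>s'\<rfloor>, \<lfloor>t\<rfloor>), (\<lfloor>s'\<rfloor>, \<lfloor>t'\<rfloor>)) \<in> (complement_step D)\<^sup>*"
      using t' outside[OF s' refl _ refl, of t] outside[OF s' refl t' refl]
      by (auto simp: complement_step_def adjacent_def)
    ultimately show ?thesis by (simp add: cell_of_def zz ww)
  qed
  moreover have "0 < e" using floor_radius_pos by (simp add: e_def)
  ultimately show ?thesis by blast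
qed

theorem quadriculated_disk_complement_connected:
  assumes "quadriculated_disk D"
  shows "complement_connected D"
  unfolding complement_connected_def
proof (intro allI impI)
  let ?S = "squares_union D" and ?R = "\<lambda>z w. (cell_of z, cell_of w) \<in> (complement_step D)\<^sup>*"
  fix q r assume "q \<notin> D" "r \<notin> D"
  have "connected (- ?S)"
    using assms connected_complement_squares_union by (auto simp: quadriculated_disk_def)
  then have "?R (centre q) (centre r)"
  proof (rule connected_equivalence_relation)
    show "centre q \<in> - ?S" "centre r \<in> - ?S"
      using \<open>q \<notin> D\<close> \<open>r \<notin> D\<close> by (simp_all add: centre_in_squares_union)
    show "?R w z" if "?R z w" for z w
      using that by (rule complement_step_rtrancl_sym)
    show "?R z u" if "?R z w" "?R w u" for z w u
      using that by (rule rtrancl_trans)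
    show "\<exists>U. openin (top_of_set (- ?S)) U \<and> z \<in> U \<and> (\<forall>w\<in>U. ?R z w)" if z: "z \<in> - ?S" for z
    proof -
      obtain e where "e > 0" "\<And>w. dist w z < e \<Longrightarrow> ?R z w"
        using complement_step_near[of z D] z by auto
      moreover have "openin (top_of_set (- ?S)) (- ?S \<inter> ball z e)"
        by (rule openin_open_Int) simp
      ultimately show ?thesis
        using z by (intro exI[of _ "- ?S \<inter> ball z e"]) (auto simp: dist_commute)
    qed
  qed
  then show "(q, r) \<in> (complement_step D)\<^sup>*" by (simp add: cell_of_centre)
qed

corollary quadriculated_disk_domino_flip_connected:
  assumes "quadriculated_disk D" "tiling domino D T1" "tiling domino D T2"
  shows "domino_flip\<^sup>*\<^sup>* T1 T2"
proof -
  have fin: "finite D" using assms(1) by (simp add: quadriculated_disk_def)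
  have "domino_region D (Min (fst ` D) - 1) (Max (fst ` D) + 1)"
  proof
    fix p assume "p \<in> D"
    then have "Min (fst ` D) \<le> fst p" "fst p \<le> Max (fst ` D)" using fin by auto
    then show "Min (fst ` D) - 1 < fst p" "fst p < Max (fst ` D) + 1" by linarith+
  qed (use fin quadriculated_disk_complement_connected[OF assms(1)] in auto)
  then show ?thesis by (rule domino_region.domino_tilings_flip_connected[OF _ assms(2,3)])
qed

section \<open>Slab tilings of D x [0,2]\<close>

type_synonym cube = "int \<times> int \<times> int"

definition slab_xy :: "int \<Rightarrow> int \<Rightarrow> int \<Rightarrow> cube set" where
  "slab_xy x y z = {(x, y, z), (x + 1, y, z), (x, y + 1, z), (x + 1, y + 1, z)}"

definition slab_xz :: "int \<Rightarrow> int \<Rightarrow> int \<Rightarrow> cube set" where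
  "slab_xz x y z = {(x, y, z), (x + 1, y, z), (x, y, z + 1), (x + 1, y, z + 1)}"

definition slab_yz :: "int \<Rightarrow> int \<Rightarrow> int \<Rightarrow> cube set" where
  "slab_yz x y z = {(x, y, z), (x, y + 1, z), (x, y, z + 1), (x, y + 1, z + 1)}"

lemma slab_iff: "slab S \<longleftrightarrow> (\<exists>x y z. S = slab_xy x y z \<or> S = slab_xz x y z \<or> S = slab_yz x y z)"
proof -
  have "{(x + i, y + j, z) | i j. i \<in> {0, 1} \<and> j \<in> {0, 1}} = slab_xy x y z"
    "{(x + i, y, z + k) | i k. i \<in> {0, 1} \<and> k \<in> {0, 1}} = slab_xz x y z"
    "{(x, y + j, z + k) | j k. j \<in> {0, 1} \<and> k \<in> {0, 1}} = slab_yz x y z" for x y z :: int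
    unfolding slab_xy_def slab_xz_def slab_yz_def by auto
  then show ?thesis by (simp only: slab_def)
qed

lemma cube2_iff: "cube2 C \<longleftrightarrow> (\<exists>x y z. C = slab_xy x y z \<union> slab_xy x y (z + 1))"
proof -
  have "{(x + i, y + j, z + k) | i j k. i \<in> {0, 1} \<and> j \<in> {0, 1} \<and> k \<in> {0, 1}} =
      slab_xy x y z \<union> slab_xy x y (z + 1)" for x y z :: int
  proof (rule subset_antisym)
    show "{(x + i, y + j, z + k) | i j k. i \<in> {0, 1} \<and> j \<in> {0, 1} \<and> k \<in> {0, 1}} \<subseteq>
        slab_xy x y z \<union> slab_xy x y (z + 1)"
    proof
      fix s assume "s \<in> {(x + i, y + j, z + k) | i j k. i \<in> {0, 1} \<and> j \<in> {0, 1} \<and> k \<in> {0, 1::int}}"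
      then obtain i j k :: int where "s = (x + i, y + j, z + k)" "i = 0 \<or> i = 1" "j = 0 \<or> j = 1" "k = 0 \<or> k = 1"
        by blast
      then show "s \<in> slab_xy x y z \<union> slab_xy x y (z + 1)"
        unfolding slab_xy_def by (elim disjE) simp_all
    qed
  qed (simp add: slab_xy_def)
  then show ?thesis by (simp only: cube2_def)
qed

lemma slab_nonempty: "slab S \<Longrightarrow> S \<noteq> {}"
  unfolding slab_iff slab_xy_def slab_xz_def slab_yz_def by auto

lemma slab_tiling_iff: "slab_tiling R T \<longleftrightarrow> tiling slab R T"
  by (simp add: slab_tiling_def tiling_def)

lemma slab_tiling_flip:
  assumes "slab_tiling R T" "flip T T'"
  shows "slab_tiling R T'"
  using assms tiling_replace_pair[of slab R T] unfolding slab_tiling_iff flip_def by blast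

lemma flip_sym:
  assumes T: "slab_tiling R T" and "flip T T'"
  shows "flip T' T"
proof -
  obtain S1 S2 S1' S2' where S: "S1 \<in> T" "S2 \<in> T" "S1 \<noteq> S2" "cube2 (S1 \<union> S2)"
    and S': "slab S1'" "slab S2'" "S1' \<inter> S2' = {}" "S1' \<union> S2' = S1 \<union> S2" "{S1', S2'} \<noteq> {S1, S2}"
    and T': "T' = T - {S1, S2} \<union> {S1', S2'}"
    using assms(2) unfolding flip_def by blast
  show ?thesis
    unfolding flip_def
  proof (rule exI[of _ S1'], rule exI[of _ S2'], rule exI[of _ S1], rule exI[of _ S2], intro conjI)
    show "S1' \<in> T'" "S2' \<in> T'" using T' by simp_all
    show "S1' \<noteq> S2'" using S'(1,3) slab_nonempty by blast
    show "cube2 (S1' \<union> S2')" using S(4) S'(4) by simp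
    show "slab S1" "slab S2" "S1 \<inter> S2 = {}"
      using T[unfolded slab_tiling_iff] S(1-3) by (simp_all add: tiling_tile_property tiling_tiles_disjoint)
    show "S1 \<union> S2 = S1' \<union> S2'" "{S1, S2} \<noteq> {S1', S2'}" using S'(4,5) by auto
    have "T = (T - {S1, S2} \<union> {S1', S2'}) - {S1', S2'} \<union> {S1, S2}"
      using T[unfolded slab_tiling_iff] S(1,2) S'(1,2,4) slab_nonempty
      by (intro tiling_replace_pair_inverse) auto
    then show "T = T' - {S1', S2'} \<union> {S1, S2}" by (simp only: T')
  qed
qed

lemma flips_slab_tiling: "flip\<^sup>*\<^sup>* T T' \<Longrightarrow> slab_tiling R T \<Longrightarrow> slab_tiling R T'"
  by (induction rule: rtranclp_induct) (auto intro: slab_tiling_flip)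

lemma flips_sym: "flip\<^sup>*\<^sup>* T T' \<Longrightarrow> slab_tiling R T \<Longrightarrow> flip\<^sup>*\<^sup>* T' T"
proof (induction rule: rtranclp_induct)
  case (step T' T'')
  then have "flip T'' T'" using flip_sym flips_slab_tiling by blast
  then show ?case using step by (simp add: converse_rtranclp_into_rtranclp)
qed simp

lemma cylinder2_iff [simp]: "(x, y, z) \<in> cylinder2 D \<longleftrightarrow> (x, y) \<in> D \<and> (z = 0 \<or> z = 1)"
  by (simp add: cylinder2_def)

lemma finite_cylinder2: "finite D \<Longrightarrow> finite (cylinder2 D)"
proof -
  assume "finite D"
  moreover have "cylinder2 D \<subseteq> (\<lambda>(p, z). (fst p, snd p, z)) ` (D \<times> {0, 1})"
    by (auto simp: cylinder2_def image_iff) force+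
  ultimately show ?thesis by (auto intro: finite_subset)
qed

lemma upright_slab_bottom:
  assumes "slab_tiling (cylinder2 D) T" "slab_xz x y z \<in> T \<or> slab_yz x y z \<in> T"
  shows "z = 0"
proof -
  obtain S where "S \<in> T" and S: "S = slab_xz x y z \<or> S = slab_yz x y z"
    using assms(2) by blast
  then have "S \<subseteq> cylinder2 D"
    using assms(1) by (simp add: slab_tiling_iff tiling_tile_subset)
  moreover have "(x, y, z) \<in> S" "(x, y, z + 1) \<in> S"
    using S by (auto simp: slab_xz_def slab_yz_def)
  ultimately have "(x, y, z) \<in> cylinder2 D" "(x, y, z + 1) \<in> cylinder2 D" by auto
  then show ?thesis by auto
qed

definition is_flat :: "cube set \<Rightarrow> bool" where
  "is_flat S \<longleftrightarrow> (\<exists>x y z. S = slab_xy x y z)"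

lemma upright_not_flat: "\<not> is_flat (slab_xz x y z)" "\<not> is_flat (slab_yz x y z)"
proof -
  have "\<not> {(x, y, z), (x, y, z + 1)} \<subseteq> slab_xy x' y' z'" for x' y' z'
    by (auto simp: slab_xy_def)
  moreover have "{(x, y, z), (x, y, z + 1)} \<subseteq> slab_xz x y z" "{(x, y, z), (x, y, z + 1)} \<subseteq> slab_yz x y z"
    by (simp_all add: slab_xz_def slab_yz_def)
  ultimately show "\<not> is_flat (slab_xz x y z)" "\<not> is_flat (slab_yz x y z)"
    unfolding is_flat_def by metis+
qed

lemma finite_lex_least:
  fixes B :: "(int \<times> int) set"
  assumes "finite B" "B \<noteq> {}"
  obtains x0 y0 where "(x0, y0) \<in> B" "\<And>x y. (x, y) \<in> B \<Longrightarrow> x0 < x \<or> (x0 = x \<and> y0 \<le> y)"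
proof -
  define x0 where "x0 = Min (fst ` B)"
  define y0 where "y0 = Min {y. (x0, y) \<in> B}"
  have "x0 \<in> fst ` B" unfolding x0_def using assms by (intro Min_in) auto
  moreover have fin: "finite {y. (x0, y) \<in> B}"
    using finite_imageI[OF assms(1), of snd] by (rule finite_subset[rotated]) force
  ultimately have "(x0, y0) \<in> B"
    unfolding y0_def by (auto intro!: Min_in) (metis Min_in empty_iff mem_Collect_eq)
  moreover have "x0 < x \<or> (x0 = x \<and> y0 \<le> y)" if "(x, y) \<in> B" for x y
  proof -
    have "x0 \<le> x" unfolding x0_def using assms(1) that by (force intro: Min_le)
    moreover have "x = x0 \<Longrightarrow> y0 \<le> y" unfolding y0_def using fin that by (auto intro: Min_le)
    ultimately show ?thesis by auto
  qed
  ultimately show ?thesis using that by blast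
qed

text \<open>A flat slab whose base square is lexicographically least among the flat slabs shares its
  column neither with an upright slab, which would meet it, nor with a flat slab with another
  base, whose base would be smaller.\<close>

lemma flat_slab_partner:
  assumes T: "slab_tiling (cylinder2 D) T" and z0: "slab_xy x0 y0 z0 \<in> T"
    and least: "\<And>x y z. slab_xy x y z \<in> T \<Longrightarrow> x0 < x \<or> (x0 = x \<and> y0 \<le> y)"
  shows "slab_xy x0 y0 (1 - z0) \<in> T"
proof -
  have sl: "\<And>S. S \<in> T \<Longrightarrow> slab S" and R: "\<And>S. S \<in> T \<Longrightarrow> S \<subseteq> cylinder2 D"
    and dis: "\<And>A B. A \<in> T \<Longrightarrow> B \<in> T \<Longrightarrow> A \<noteq> B \<Longrightarrow> A \<inter> B = {}"
    and cover: "\<Union>T = cylinder2 D"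
    using T unfolding slab_tiling_def by blast+
  have "(x0, y0, z0) \<in> cylinder2 D" using R[OF z0] by (force simp: slab_xy_def)
  then have z01: "z0 = 0 \<or> z0 = 1" and "(x0, y0) \<in> D" by auto
  define z1 where "z1 = 1 - z0"
  have "(x0, y0, z1) \<in> cylinder2 D" using z01 \<open>(x0, y0) \<in> D\<close> by (auto simp: z1_def)
  then obtain S where S: "S \<in> T" "(x0, y0, z1) \<in> S" using cover by blast
  obtain x y z where "S = slab_xy x y z \<or> S = slab_xz x y z \<or> S = slab_yz x y z"
    using sl[OF S(1)] unfolding slab_iff by blast
  then consider (flat) "S = slab_xy x y z" | (upright) "S = slab_xz x y z \<or> S = slab_yz x y z"
    by blast
  then have "S = slab_xy x0 y0 z1"
  proof cases
    case flat
    then have "z = z1" "x = x0 \<or> x = x0 - 1" "y = y0 \<or> y = y0 - 1"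
      using S(2) by (auto simp: slab_xy_def)
    then show ?thesis using least[of x y z] S(1) flat by auto
  next
    case upright
    moreover have "z = 0" using upright_slab_bottom[OF T] S(1) calculation by blast
    ultimately have "(x0, y0, z0) \<in> S" using S(2) z01 by (auto simp: slab_xz_def slab_yz_def z1_def)
    moreover have "(x0, y0, z0) \<in> slab_xy x0 y0 z0" "(x0, y0, z1) \<notin> slab_xy x0 y0 z0"
      using z01 by (auto simp: slab_xy_def z1_def)
    ultimately show ?thesis using dis[OF S(1) z0] S(2) by blast
  qed
  then show ?thesis using S(1) by (simp add: z1_def)
qed

lemma stacked_flat_slabs:
  assumes fin: "finite D" and T: "slab_tiling (cylinder2 D) T" and flat: "\<exists>S\<in>T. is_flat S"
  shows "\<exists>x y. slab_xy x y 0 \<in> T \<and> slab_xy x y 1 \<in> T"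
proof -
  define B where "B = {(x, y). \<exists>z. slab_xy x y z \<in> T}"
  have "B \<subseteq> D"
    using T unfolding slab_tiling_def by (force simp: B_def slab_xy_def)
  then have "finite B" using fin by (rule finite_subset)
  moreover have "B \<noteq> {}" using flat by (auto simp: B_def is_flat_def)
  ultimately obtain x0 y0 where "(x0, y0) \<in> B"
    and least: "\<And>x y. (x, y) \<in> B \<Longrightarrow> x0 < x \<or> (x0 = x \<and> y0 \<le> y)"
    using finite_lex_least by blast
  then obtain z0 where z0: "slab_xy x0 y0 z0 \<in> T" by (auto simp: B_def)
  then have "(x0, y0, z0) \<in> cylinder2 D"
    using T unfolding slab_tiling_def by (force simp: slab_xy_def)
  moreover have "slab_xy x0 y0 (1 - z0) \<in> T"
    using flat_slab_partner[OF T z0] least by (auto simp: B_def)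
  ultimately have "slab_xy x0 y0 0 \<in> T \<and> slab_xy x0 y0 1 \<in> T"
    using z0 by auto
  then show ?thesis by blast
qed

definition lift :: "cell set \<Rightarrow> cube set" where
  "lift d = {(x, y, z). (x, y) \<in> d \<and> (z = 0 \<or> z = 1)}"

lemma lift_horizontal_domino: "lift {(x, y), (x + 1, y)} = slab_xz x y 0"
  and lift_vertical_domino: "lift {(x, y), (x, y + 1)} = slab_yz x y 0"
  unfolding lift_def slab_xz_def slab_yz_def by auto

lemma inj_lift: "inj lift"
proof (rule injI)
  fix d d' assume "lift d = lift d'"
  then have "(x, y, 0) \<in> lift d \<longleftrightarrow> (x, y, 0) \<in> lift d'" for x y by simp
  then show "d = d'" unfolding lift_def by auto
qed

lemma lift_horizontal_pair: "lift ` horizontal_pair x y = {slab_xz x y 0, slab_xz x (y + 1) 0}"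
  and lift_vertical_pair: "lift ` vertical_pair x y = {slab_yz x y 0, slab_yz (x + 1) y 0}"
  using lift_horizontal_domino[of x y] lift_horizontal_domino[of x "y + 1"]
    lift_vertical_domino[of x y] lift_vertical_domino[of "x + 1" y]
  by (simp_all add: horizontal_pair_def vertical_pair_def)

definition cube_pairs :: "int \<Rightarrow> int \<Rightarrow> cube set set set" where
  "cube_pairs x y = {{slab_xy x y 0, slab_xy x y 1}, lift ` horizontal_pair x y, lift ` vertical_pair x y}"

lemma cube_pair_tiles_cube:
  assumes "P \<in> cube_pairs x y"
  shows "\<exists>S1 S2. P = {S1, S2} \<and> S1 \<noteq> S2 \<and> slab S1 \<and> slab S2 \<and> S1 \<inter> S2 = {} \<and>
    S1 \<union> S2 = slab_xy x y 0 \<union> slab_xy x y 1"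
proof -
  have slabs: "slab (slab_xy x y z)" "slab (slab_xz x y z)" "slab (slab_yz x y z)" for x y z
    unfolding slab_iff by blast+
  from assms consider (flat) "P = {slab_xy x y 0, slab_xy x y 1}"
    | (xz) "P = {slab_xz x y 0, slab_xz x (y + 1) 0}" | (yz) "P = {slab_yz x y 0, slab_yz (x + 1) y 0}"
    unfolding cube_pairs_def lift_horizontal_pair lift_vertical_pair by blast
  then show ?thesis
  proof cases
    case flat
    have cube: "(x, y, 0) \<in> slab_xy x y 0 - slab_xy x y 1" "slab_xy x y 0 \<inter> slab_xy x y 1 = {}"
      by (auto simp: slab_xy_def)
    show ?thesis unfolding flat
      by (rule exI[of _ "slab_xy x y 0"], rule exI[of _ "slab_xy x y 1"]) (use slabs cube in blast)
  next
    case xz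
    have cube: "(x, y, 0) \<in> slab_xz x y 0 - slab_xz x (y + 1) 0" "slab_xz x y 0 \<inter> slab_xz x (y + 1) 0 = {}"
      "slab_xz x y 0 \<union> slab_xz x (y + 1) 0 = slab_xy x y 0 \<union> slab_xy x y 1"
      by (auto simp: slab_xy_def slab_xz_def)
    show ?thesis unfolding xz
      by (rule exI[of _ "slab_xz x y 0"], rule exI[of _ "slab_xz x (y + 1) 0"]) (use slabs cube in blast)
  next
    case yz
    have cube: "(x, y, 0) \<in> slab_yz x y 0 - slab_yz (x + 1) y 0" "slab_yz x y 0 \<inter> slab_yz (x + 1) y 0 = {}"
      "slab_yz x y 0 \<union> slab_yz (x + 1) y 0 = slab_xy x y 0 \<union> slab_xy x y 1"
      by (auto simp: slab_xy_def slab_yz_def)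
    show ?thesis unfolding yz
      by (rule exI[of _ "slab_yz x y 0"], rule exI[of _ "slab_yz (x + 1) y 0"]) (use slabs cube in blast)
  qed
qed

lemma flip_cube_pairs:
  assumes "P \<in> cube_pairs x y" "Q \<in> cube_pairs x y" "P \<noteq> Q" "P \<subseteq> T"
  shows "flip T (T - P \<union> Q)"
proof -
  obtain S1 S2 where P: "P = {S1, S2}" "S1 \<noteq> S2" "S1 \<union> S2 = slab_xy x y 0 \<union> slab_xy x y 1"
    using cube_pair_tiles_cube[OF assms(1)] by blast
  obtain S1' S2' where Q: "Q = {S1', S2'}" "slab S1'" "slab S2'" "S1' \<inter> S2' = {}"
    "S1' \<union> S2' = slab_xy x y 0 \<union> slab_xy x y 1"
    using cube_pair_tiles_cube[OF assms(2)] by blast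
  have cube: "cube2 (S1 \<union> S2)"
    unfolding cube2_iff P(3) by (rule exI[of _ x], rule exI[of _ y], rule exI[of _ 0]) simp
  show ?thesis
    unfolding flip_def
  proof (rule exI[of _ S1], rule exI[of _ S2], rule exI[of _ S1'], rule exI[of _ S2'], intro conjI)
    show "S1 \<in> T" "S2 \<in> T" using assms(4) P(1) by auto
    show "S1' \<union> S2' = S1 \<union> S2" using P(3) Q(5) by simp
    show "{S1', S2'} \<noteq> {S1, S2}" using assms(3) P(1) Q(1) by simp
    show "T - P \<union> Q = T - {S1, S2} \<union> {S1', S2'}" using P(1) Q(1) by simp
  qed (use P(2) Q(2-4) cube in simp_all)
qed

lemma flip_stacked_flat_slabs:
  assumes "slab_xy x y 0 \<in> T" "slab_xy x y 1 \<in> T"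
  shows "flip T (T - {slab_xy x y 0, slab_xy x y 1} \<union> {slab_xz x y 0, slab_xz x (y + 1) 0})"
proof -
  have "(x, y, 1) \<in> slab_xz x y 0 - slab_xy x y 0" "(x, y, 0) \<in> slab_xz x y 0 - slab_xy x y 1"
    by (simp_all add: slab_xy_def slab_xz_def)
  then have "{slab_xy x y 0, slab_xy x y 1} \<noteq> {slab_xz x y 0, slab_xz x (y + 1) 0}"
    by blast
  then show ?thesis
    using assms flip_cube_pairs[of "{slab_xy x y 0, slab_xy x y 1}" x y "{slab_xz x y 0, slab_xz x (y + 1) 0}" T]
    by (simp add: cube_pairs_def lift_horizontal_pair)
qed

lemma flips_to_upright_tiling:
  assumes fin: "finite D"
  shows "slab_tiling (cylinder2 D) T \<Longrightarrow>
    \<exists>V. flip\<^sup>*\<^sup>* T V \<and> slab_tiling (cylinder2 D) V \<and> (\<forall>S\<in>V. \<not> is_flat S)"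
proof (induction "card {S\<in>T. is_flat S}" arbitrary: T rule: less_induct)
  case less
  note T = less.prems
  show ?case
  proof (cases "\<exists>S\<in>T. is_flat S")
    case False
    then show ?thesis using T by blast
  next
    case True
    then obtain x y where flat: "slab_xy x y 0 \<in> T" "slab_xy x y 1 \<in> T"
      using stacked_flat_slabs[OF fin T] by blast
    define T' where "T' = T - {slab_xy x y 0, slab_xy x y 1} \<union> {slab_xz x y 0, slab_xz x (y + 1) 0}"
    have flip: "flip T T'" unfolding T'_def by (rule flip_stacked_flat_slabs[OF flat])
    have "finite T"
      using finite_cylinder2[OF fin] T unfolding slab_tiling_def by (metis finite_UnionD)
    then have "finite ({S\<in>T. is_flat S} - {slab_xy x y 0})" by simp
    moreover have "{S\<in>T'. is_flat S} \<subseteq> {S\<in>T. is_flat S} - {slab_xy x y 0}"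
      unfolding T'_def using upright_not_flat by auto
    ultimately have "card {S\<in>T'. is_flat S} \<le> card ({S\<in>T. is_flat S} - {slab_xy x y 0})"
      by (rule card_mono)
    also have "\<dots> < card {S\<in>T. is_flat S}"
      using \<open>finite T\<close> flat by (intro card_Diff1_less) (auto simp: is_flat_def)
    finally have "card {S\<in>T'. is_flat S} < card {S\<in>T. is_flat S}" .
    then obtain V where "flip\<^sup>*\<^sup>* T' V" "slab_tiling (cylinder2 D) V" "\<forall>S\<in>V. \<not> is_flat S"
      using less.hyps slab_tiling_flip[OF T flip] by blast
    then show ?thesis using flip by (meson converse_rtranclp_into_rtranclp)
  qed
qed

lemma upright_tiling_is_lift:
  assumes V: "slab_tiling (cylinder2 D) V" and upright: "\<forall>S\<in>V. \<not> is_flat S"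
  shows "\<exists>Td. tiling domino D Td \<and> V = lift ` Td"
proof -
  define base where "base S = {(x, y). (x, y, 0) \<in> S}" for S :: "cube set"
  have tile: "domino (base S) \<and> lift (base S) = S" if S: "S \<in> V" for S
  proof -
    obtain x y z where "S = slab_xy x y z \<or> S = slab_xz x y z \<or> S = slab_yz x y z"
      using tiling_tile_property[OF V[unfolded slab_tiling_iff] S] unfolding slab_iff by blast
    moreover have "\<not> is_flat S" using upright S by blast
    ultimately have "S = slab_xz x y z \<or> S = slab_yz x y z" by (auto simp: is_flat_def)
    moreover have "z = 0" using upright_slab_bottom[OF V] S calculation by blast
    moreover have "base (slab_xz x y 0) = {(x, y), (x + 1, y)}" "base (slab_yz x y 0) = {(x, y), (x, y + 1)}"
      by (auto simp: base_def slab_xz_def slab_yz_def)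
    ultimately show ?thesis
      using domino_horizontal domino_vertical lift_horizontal_domino lift_vertical_domino by auto
  qed
  have "tiling domino D (base ` V)"
    unfolding tiling_def
  proof (intro conjI ballI impI)
    show "domino d" if "d \<in> base ` V" for d using that tile by blast
    show "d1 \<inter> d2 = {}" if "d1 \<in> base ` V" "d2 \<in> base ` V" "d1 \<noteq> d2" for d1 d2
      using that tiling_tiles_disjoint[OF V[unfolded slab_tiling_iff]] unfolding base_def by blast
    have "(x, y) \<in> \<Union>(base ` V) \<longleftrightarrow> (x, y, 0) \<in> \<Union>V" for x y
      by (auto simp: base_def)
    then have "p \<in> \<Union>(base ` V) \<longleftrightarrow> p \<in> D" for p
      using V unfolding slab_tiling_def by (cases p) simp
    then show "\<Union>(base ` V) = D" by blast
  qed
  moreover have "V = lift ` base ` V" using tile by (force simp: image_image)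
  ultimately show ?thesis by blast
qed

lemma flip_lift:
  assumes "domino_flip Td Td'"
  shows "flip (lift ` Td) (lift ` Td')"
proof -
  have lift_swap: "lift ` (Td - P \<union> Q) = lift ` Td - lift ` P \<union> lift ` Q" for P Q
    using inj_lift by (simp add: image_Un image_set_diff)
  obtain x y where
    "horizontal_pair x y \<subseteq> Td \<and> Td' = Td - horizontal_pair x y \<union> vertical_pair x y \<or>
     vertical_pair x y \<subseteq> Td \<and> Td' = Td - vertical_pair x y \<union> horizontal_pair x y"
    using assms unfolding domino_flip_def by blast
  moreover have "(x + 1, y, 0) \<in> slab_xz x y 0 - slab_yz x y 0" "(x, y, 0) \<in> slab_xz x y 0 - slab_yz (x + 1) y 0"
    by (simp_all add: slab_xz_def slab_yz_def)
  then have "lift ` horizontal_pair x y \<noteq> lift ` vertical_pair x y"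
    unfolding lift_horizontal_pair lift_vertical_pair by blast
  ultimately show ?thesis
  proof (elim disjE conjE)
    assume "horizontal_pair x y \<subseteq> Td" and Td': "Td' = Td - horizontal_pair x y \<union> vertical_pair x y"
    then show ?thesis
      using \<open>lift ` horizontal_pair x y \<noteq> lift ` vertical_pair x y\<close> unfolding Td' lift_swap
      by (intro flip_cube_pairs[of _ x y]) (auto simp: cube_pairs_def)
  next
    assume "vertical_pair x y \<subseteq> Td" and Td': "Td' = Td - vertical_pair x y \<union> horizontal_pair x y"
    then show ?thesis
      using \<open>lift ` horizontal_pair x y \<noteq> lift ` vertical_pair x y\<close> unfolding Td' lift_swap
      by (intro flip_cube_pairs[of _ x y]) (auto simp: cube_pairs_def)
  qed
qed

lemma flips_lift: "domino_flip\<^sup>*\<^sup>* Td Td' \<Longrightarrow> flip\<^sup>*\<^sup>* (lift ` Td) (lift ` Td')"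
  by (induction rule: rtranclp_induct) (auto intro: flip_lift rtranclp.rtrancl_into_rtrancl)

lemma flips_to_lifted_domino_tiling:
  assumes "finite D" "slab_tiling (cylinder2 D) T"
  shows "\<exists>Td. tiling domino D Td \<and> flip\<^sup>*\<^sup>* T (lift ` Td)"
  using flips_to_upright_tiling[OF assms] upright_tiling_is_lift by metis

theorem lemma5p1:
  fixes D :: "(int \<times> int) set"
  assumes "quadriculated_disk D"
  shows "{T. slab_tiling (cylinder2 D) T} = {} \<or>
         (\<forall>T1 T2. slab_tiling (cylinder2 D) T1 \<longrightarrow> slab_tiling (cylinder2 D) T2 \<longrightarrow>
            flip\<^sup>*\<^sup>* T1 T2)"
proof (rule disjI2, intro allI impI)
  fix T1 T2
  assume T1: "slab_tiling (cylinder2 D) T1" and T2: "slab_tiling (cylinder2 D) T2"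
  have fin: "finite D" using assms by (simp add: quadriculated_disk_def)
  obtain Td1 where Td1: "tiling domino D Td1" "flip\<^sup>*\<^sup>* T1 (lift ` Td1)"
    using flips_to_lifted_domino_tiling[OF fin T1] by blast
  obtain Td2 where Td2: "tiling domino D Td2" "flip\<^sup>*\<^sup>* T2 (lift ` Td2)"
    using flips_to_lifted_domino_tiling[OF fin T2] by blast
  have "flip\<^sup>*\<^sup>* (lift ` Td1) (lift ` Td2)"
    using quadriculated_disk_domino_flip_connected[OF assms Td1(1) Td2(1)] by (rule flips_lift)
  moreover have "flip\<^sup>*\<^sup>* (lift ` Td2) T2" using flips_sym[OF Td2(2) T2] .
  ultimately show "flip\<^sup>*\<^sup>* T1 T2" using Td1(2) by (meson rtranclp_trans)
qed

end
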